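(* Consider the Regularized Composite Tensor Method $x_0\in\operatorname{dom}h$, $x_{k+1}=T_H(x_k)$, $k\ge0$, with $H\ge pL_p$, and assume $F=f+h$ is uniformly convex of degree $q\ge2$ with constant $\sigma_q>0$. For $k\ge0$ let $$F'(x_{k+1})=\nabla f(x_{k+1})-\nabla\Omega_p(f,x_k;x_{k+1})-\frac{H}{p!}\|x_{k+1}-x_k\|^{p-1}B(x_{k+1}-x_k).$$ Then for every $k\ge0$, $$\eta(x_{k+1})\le\|F'(x_{k+1})\|_*\le\frac{L_p+H}{p!}\Big[\frac{1}{\sigma_q}\,\eta(x_k)\Big]^{\frac{p}{q-1}}.$$
   Context: $\mathbb{E}$ is a finite-dimensional real vector space with dual $\mathbb{E}^*$; $B:\mathbb{E}\to\mathbb{E}^*$ is a fixed self-adjoint positive-definite operator, $\|x\|=\langle Bx,x\rangle^{1/2}$, $\|g\|_*=\langle g,B^{-1}g\rangle^{1/2}$. Let $p\ge 2$ be an integer, $h:\mathbb{E}\to\mathbb{R}\cup\{+\infty\}$ proper closed convex, and $f$ convex and $p$ times differentiable on an open convex set containing $\operatorname{dom}h$, with $\|D^pf(x)-D^pf(y)\|\le L_p\|x-y\|$ for $x,y\in\operatorname{dom}h$, $0<L_p<\infty$, where for a symmetric $p$-linear form $\|A\|=\max_{\|u\|\le1}|A[u]^p|$. $F=f+h$. Taylor polynomial $\Omega_p(f,x;y)=f(x)+\sum_{k=1}^p\frac1{k!}D^kf(x)[y-x]^k$, with gradient in $y$: $\nabla\Omega_p(f,x;y)=\sum_{k=1}^p\frac1{(k-1)!}D^kf(x)[y-x]^{k-1}$.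 For $x\in\operatorname{dom}h$, $T_H(x)=\arg\min_{y\in\mathbb{E}}\{\Omega_p(f,x;y)+\frac{H}{(p+1)!}\|y-x\|^{p+1}+h(y)\}$. Uniform convexity of degree $q$ with constant $\sigma_q$: $\langle G_x-G_y,x-y\rangle\ge\sigma_q\|x-y\|^q$ for all $x,y\in\operatorname{dom}h$, $G_x\in\partial F(x)$, $G_y\in\partial F(y)$. For $x\in\operatorname{dom}h$, $\eta(x)=\min_{g\in\partial h(x)}\|\nabla f(x)+g\|_*$, with $\eta(x)=+\infty$ if $\partial h(x)=\emptyset$. *)

theory Defs
  imports "HOL-Analysis.Analysis"
begin

text \<open>The space E is modelled by a type of class euclidean_space; the dual space
is identified with E via the standard inner product, so B is a linear map on E.\<close>

definition bnorm :: "('a::euclidean_space \<Rightarrow> 'a) \<Rightarrow> 'a \<Rightarrow> real" where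
  "bnorm B x = sqrt (B x \<bullet> x)"

definition dnorm :: "('a::euclidean_space \<Rightarrow> 'a) \<Rightarrow> 'a \<Rightarrow> real" where
  "dnorm B g = sqrt (g \<bullet> inv B g)"

text \<open>k-th Frechet derivative as a k-linear form on lists of directions:
  kderiv (Suc k) f x (v # us) = D (D^k f(.)[us]) (x) [v].\<close>
fun kderiv :: "nat \<Rightarrow> ('a::euclidean_space \<Rightarrow> real) \<Rightarrow> 'a \<Rightarrow> 'a list \<Rightarrow> real" where
  "kderiv 0 f x us = f x"
| "kderiv (Suc k) f x us = frechet_derivative (\<lambda>y. kderiv k f y (tl us)) (at x) (hd us)"

definition ktimes_differentiable_on :: "nat \<Rightarrow> ('a::euclidean_space \<Rightarrow> real) \<Rightarrow> 'a set \<Rightarrow> bool" where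
  "ktimes_differentiable_on p f U \<longleftrightarrow>
     (\<forall>k<p. \<forall>x\<in>U. \<forall>us. length us = k \<longrightarrow> (\<lambda>y. kderiv k f y us) differentiable (at x))"

definition tnorm :: "('a::euclidean_space \<Rightarrow> 'a) \<Rightarrow> nat \<Rightarrow> ('a list \<Rightarrow> real) \<Rightarrow> real" where
  "tnorm B p A = Sup {\<bar>A (replicate p u)\<bar> | u. bnorm B u \<le> 1}"

definition dualvec :: "('a::euclidean_space \<Rightarrow> real) \<Rightarrow> 'a" where
  "dualvec L = (\<Sum>b\<in>Basis. L b *\<^sub>R b)"

definition grad :: "('a::euclidean_space \<Rightarrow> real) \<Rightarrow> 'a \<Rightarrow> 'a" where
  "grad f x = dualvec (frechet_derivative f (at x))"

definition taylor :: "nat \<Rightarrow> ('a::euclidean_space \<Rightarrow> real) \<Rightarrow> 'a \<Rightarrow> 'a \<Rightarrow> real" where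
  "taylor p f x y = f x + (\<Sum>k=1..p. kderiv k f x (replicate k (y - x)) / fact k)"

definition taylor_grad :: "nat \<Rightarrow> ('a::euclidean_space \<Rightarrow> real) \<Rightarrow> 'a \<Rightarrow> 'a \<Rightarrow> 'a" where
  "taylor_grad p f x y =
     dualvec (\<lambda>v. \<Sum>k=1..p. kderiv k f x (v # replicate (k - 1) (y - x)) / fact (k - 1))"

definition edom :: "('a \<Rightarrow> ereal) \<Rightarrow> 'a set" where
  "edom h = {x. h x < \<infinity>}"

definition proper_fun :: "('a \<Rightarrow> ereal) \<Rightarrow> bool" where
  "proper_fun h \<longleftrightarrow> (\<exists>x. h x < \<infinity>) \<and> (\<forall>x. h x > -\<infinity>)"

definition closed_fun :: "('a::topological_space \<Rightarrow> ereal) \<Rightarrow> bool" where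
  "closed_fun h \<longleftrightarrow> closed {(x, t::real). h x \<le> ereal t}"

definition convex_fun :: "('a::real_vector \<Rightarrow> ereal) \<Rightarrow> bool" where
  "convex_fun h \<longleftrightarrow> convex {(x, t::real). h x \<le> ereal t}"

definition subdiff :: "('a::euclidean_space \<Rightarrow> ereal) \<Rightarrow> 'a \<Rightarrow> 'a set" where
  "subdiff \<phi> x = {g. \<phi> x < \<infinity> \<and> (\<forall>y. \<phi> x + ereal (g \<bullet> (y - x)) \<le> \<phi> y)}"

definition compfun :: "('a \<Rightarrow> real) \<Rightarrow> ('a \<Rightarrow> ereal) \<Rightarrow> 'a \<Rightarrow> ereal" where
  "compfun f h y = (if h y = \<infinity> then \<infinity> else ereal (f y) + h y)"

text \<open>Regularized model whose minimizer is T_H(x).\<close>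
definition tmodel :: "('a::euclidean_space \<Rightarrow> 'a) \<Rightarrow> nat \<Rightarrow> real \<Rightarrow> ('a \<Rightarrow> real) \<Rightarrow> ('a \<Rightarrow> ereal) \<Rightarrow> 'a \<Rightarrow> 'a \<Rightarrow> ereal" where
  "tmodel B p H f h x y =
     ereal (taylor p f x y + H / fact (p + 1) * bnorm B (y - x) ^ (p + 1)) + h y"

definition eta :: "('a::euclidean_space \<Rightarrow> 'a) \<Rightarrow> ('a \<Rightarrow> real) \<Rightarrow> ('a \<Rightarrow> ereal) \<Rightarrow> 'a \<Rightarrow> ereal" where
  "eta B f h x = (if subdiff h x = {} then \<infinity>
                  else ereal (Inf {dnorm B (grad f x + g) | g. g \<in> subdiff h x}))"

end

theory Submission
  imports Defs "HOL-Computational_Algebra.Polynomial"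
begin

text \<open>
  Write d = x_(k+1) - x_k and r = ||d||. The optimality condition of the regularized model at
  x_(k+1) says that g = -(grad Omega_p(f, x_k; x_(k+1)) + H/p! r^(p-1) B d) is a subgradient of h
  at x_(k+1); hence F'(x_(k+1)) = grad f(x_(k+1)) + g is a subgradient of F there, which is the
  first inequality.

  Taylor's formula with a Lipschitz p-th derivative bounds the gradient error
  grad f(x_(k+1)) - grad Omega_p by L_p/p! r^p in the dual norm. This needs the polarization bound
  |A[v, d, ..., d]| <= ||A|| ||v|| ||d||^(p-1) for symmetric p-linear forms, which reduces to the
  plane spanned by v and d and there to a Bernstein-type bound on the two top coefficients of a
  real polynomial. Consequently ||F'(x_(k+1))||_* <= (L_p + H)/p! r^p and
  <F'(x_(k+1)), d> <= (L_p - H)/p! r^(p+1) <= 0. Uniform convexity, applied to F'(x_(k+1)) and any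
  subgradient G of F at x_k, gives sigma r^q <= <G - F'(x_(k+1)), -d> <= ||G||_* r, so
  r^(q-1) <= eta(x_k)/sigma.
\<close>

section \<open>Symmetric multilinear forms\<close>

definition multilinear_form :: "nat \<Rightarrow> ('a::real_vector list \<Rightarrow> real) \<Rightarrow> bool" where
  "multilinear_form n A \<longleftrightarrow>
     (\<forall>xs ys. length xs + Suc (length ys) = n \<longrightarrow> linear (\<lambda>u. A (xs @ u # ys)))"

definition symmetric_form :: "nat \<Rightarrow> ('a list \<Rightarrow> real) \<Rightarrow> bool" where
  "symmetric_form n A \<longleftrightarrow> (\<forall>us vs. length us = n \<longrightarrow> mset vs = mset us \<longrightarrow> A vs = A us)"

lemma multilinear_formD:
  assumes "multilinear_form n A" "length xs + Suc (length ys) = n"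
  shows "linear (\<lambda>u. A (xs @ u # ys))"
  using assms unfolding multilinear_form_def by blast

lemma multilinear_form_add:
  assumes "multilinear_form n A" "length xs + Suc (length ys) = n"
  shows "A (xs @ (u + v) # ys) = A (xs @ u # ys) + A (xs @ v # ys)"
  using linear_add[OF multilinear_formD[OF assms]] by simp

lemma multilinear_form_scale:
  assumes "multilinear_form n A" "length xs + Suc (length ys) = n"
  shows "A (xs @ (c *\<^sub>R u) # ys) = c * A (xs @ u # ys)"
  using linear_scale[OF multilinear_formD[OF assms]] by simp

lemma multilinear_form_zero:
  assumes "multilinear_form n A" "length xs + Suc (length ys) = n"
  shows "A (xs @ 0 # ys) = 0"
  using multilinear_form_scale[OF assms, of 0 0] by simp

lemma multilinear_form_replicate_scale:
  assumes "multilinear_form n A" "length xs + m + length ys = n"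
  shows "A (xs @ replicate m (c *\<^sub>R u) @ ys) = c ^ m * A (xs @ replicate m u @ ys)"
  using assms(2)
proof (induction m arbitrary: ys)
  case (Suc m)
  have rep: "replicate (Suc m) x @ ys = replicate m x @ x # ys" for x :: 'a
    by (simp add: replicate_app_Cons_same)
  have "A (xs @ replicate (Suc m) (c *\<^sub>R u) @ ys) = A (xs @ replicate m (c *\<^sub>R u) @ (c *\<^sub>R u) # ys)"
    by (simp only: rep)
  also have "\<dots> = c ^ m * A (xs @ replicate m u @ (c *\<^sub>R u) # ys)"
    using Suc.IH[of "(c *\<^sub>R u) # ys"] Suc.prems by simp
  also have "A (xs @ replicate m u @ (c *\<^sub>R u) # ys) = c * A ((xs @ replicate m u) @ u # ys)"
    using multilinear_form_scale[OF assms(1), of "xs @ replicate m u" ys] Suc.prems by simp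
  finally show ?case by (simp only: rep append_assoc power_Suc2 mult_ac)
qed simp

lemma multilinear_form_Cons:
  assumes "multilinear_form (Suc n) A"
  shows "multilinear_form n (\<lambda>us. A (b # us))"
  unfolding multilinear_form_def
proof (intro allI impI)
  fix xs ys :: "'a list" assume "length xs + Suc (length ys) = n"
  then show "linear (\<lambda>u. A (b # xs @ u # ys))"
    using multilinear_formD[OF assms, of "b # xs" ys] by simp
qed

lemma multilinear_form_diff:
  assumes "multilinear_form n A" "multilinear_form n A'"
  shows "multilinear_form n (\<lambda>us. A us - A' us)"
  unfolding multilinear_form_def
proof (intro allI impI)
  fix xs ys :: "'a list" assume "length xs + Suc (length ys) = n"
  then show "linear (\<lambda>u. A (xs @ u # ys) - A' (xs @ u # ys))"
    by (intro linear_compose_sub multilinear_formD[OF assms(1)] multilinear_formD[OF assms(2)])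
qed

lemma symmetric_formD:
  "symmetric_form n A \<Longrightarrow> length us = n \<Longrightarrow> mset vs = mset us \<Longrightarrow> A vs = A us"
  unfolding symmetric_form_def by blast

lemma symmetric_form_diff:
  "symmetric_form n A \<Longrightarrow> symmetric_form n A' \<Longrightarrow> symmetric_form n (\<lambda>us. A us - A' us)"
  unfolding symmetric_form_def by (metis (no_types))

lemma multilinear_form_bounded:
  fixes A :: "'a::euclidean_space list \<Rightarrow> real"
  assumes "multilinear_form n A"
  shows "\<exists>C\<ge>0. \<forall>us. length us = n \<longrightarrow> \<bar>A us\<bar> \<le> C * prod_list (map norm us)"
  using assms
proof (induction n arbitrary: A)
  case 0
  show ?case by (rule exI[of _ "\<bar>A []\<bar>"]) auto
next
  case (Suc n)
  have "\<forall>b. \<exists>C\<ge>0. \<forall>us. length us = n \<longrightarrow> \<bar>A (b # us)\<bar> \<le> C * prod_list (map norm us)"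
    using Suc.IH[OF multilinear_form_Cons[OF Suc.prems]] by blast
  from choice[OF this] obtain C where C: "\<And>b. C b \<ge> 0"
    "\<And>b us. length us = n \<Longrightarrow> \<bar>A (b # us)\<bar> \<le> C b * prod_list (map norm us)"
    by blast
  have Cons_bound: "\<bar>A (u # R)\<bar> \<le> (\<Sum>b\<in>Basis. C b) * prod_list (map norm (u # R))" if "length R = n" for u R
  proof -
    have lin: "linear (\<lambda>u. A (u # R))"
      using multilinear_formD[OF Suc.prems, of "[]" R] that by simp
    have "A (u # R) = (\<Sum>b\<in>Basis. (u \<bullet> b) * A (b # R))"
      using linear_sum[OF lin, of "\<lambda>b. (u \<bullet> b) *\<^sub>R b" Basis] linear_scale[OF lin]
      by (simp add: euclidean_representation)
    also have "\<bar>\<dots>\<bar> \<le> (\<Sum>b\<in>Basis. norm u * (C b * prod_list (map norm R)))"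
    proof (intro order_trans[OF sum_abs] sum_mono)
      fix b :: 'a assume "b \<in> Basis"
      then have "\<bar>u \<bullet> b\<bar> \<le> norm u" by (rule Basis_le_norm)
      then show "\<bar>(u \<bullet> b) * A (b # R)\<bar> \<le> norm u * (C b * prod_list (map norm R))"
        unfolding abs_mult using C(2)[OF that] by (rule mult_mono) simp_all
    qed
    also have "\<dots> = (\<Sum>b\<in>Basis. C b) * prod_list (map norm (u # R))"
      by (simp add: sum_distrib_left sum_distrib_right algebra_simps)
    finally show ?thesis .
  qed
  show ?case
  proof (intro exI[of _ "\<Sum>b\<in>Basis. C b"] conjI allI impI)
    show "(\<Sum>b\<in>Basis. C b) \<ge> 0" by (simp add: sum_nonneg C(1))
    fix us :: "'a list" assume "length us = Suc n"
    then obtain u R where "us = u # R" "length R = n" by (cases us) auto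
    then show "\<bar>A us\<bar> \<le> (\<Sum>b\<in>Basis. C b) * prod_list (map norm us)" using Cons_bound by simp
  qed
qed

fun form_line_poly :: "('a::real_vector list \<Rightarrow> real) \<Rightarrow> nat \<Rightarrow> 'a \<Rightarrow> 'a \<Rightarrow> 'a list \<Rightarrow> real poly" where
  "form_line_poly A 0 w d R = [:A R:]"
| "form_line_poly A (Suc m) w d R =
     form_line_poly A m w d (w # R) + pCons 0 (form_line_poly A m w d (d # R))"

lemma poly_form_line_poly:
  assumes "multilinear_form n A" "length R + m = n"
  shows "poly (form_line_poly A m w d R) t = A (replicate m (w + t *\<^sub>R d) @ R)"
  using assms(2)
proof (induction m arbitrary: R)
  case (Suc m)
  let ?v = "w + t *\<^sub>R d"
  have len: "length (replicate m ?v) + Suc (length R) = n"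
    using Suc.prems by simp
  have "A (replicate (Suc m) ?v @ R) = A (replicate m ?v @ ?v # R)"
    by (simp add: replicate_app_Cons_same)
  also have "\<dots> = A (replicate m ?v @ w # R) + t * A (replicate m ?v @ d # R)"
    by (simp add: multilinear_form_add[OF assms(1) len] multilinear_form_scale[OF assms(1) len])
  finally show ?case using Suc.IH[of "w # R"] Suc.IH[of "d # R"] Suc.prems by simp
qed simp

lemma degree_form_line_poly: "degree (form_line_poly A m w d R) \<le> m"
proof (induction m arbitrary: R)
  case (Suc m)
  then show ?case
    by (simp add: degree_add_le le_SucI order_trans[OF degree_pCons_le])
qed simp

declare form_line_poly.simps(2) [simp del]

lemma coeff_form_line_poly_Suc:
  "coeff (form_line_poly A (Suc m) w d R) 0 = coeff (form_line_poly A m w d (w # R)) 0"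
  "coeff (form_line_poly A (Suc m) w d R) (Suc k) =
     coeff (form_line_poly A m w d (w # R)) (Suc k) + coeff (form_line_poly A m w d (d # R)) k"
  by (simp_all add: form_line_poly.simps(2))

lemma coeff_form_line_poly_0: "coeff (form_line_poly A m w d R) 0 = A (replicate m w @ R)"
  by (induction m arbitrary: R) (simp_all add: coeff_form_line_poly_Suc replicate_app_Cons_same)

lemma coeff_form_line_poly_top: "coeff (form_line_poly A m w d R) m = A (replicate m d @ R)"
proof (induction m arbitrary: R)
  case (Suc m)
  have "coeff (form_line_poly A m w d (w # R)) (Suc m) = 0"
    using degree_form_line_poly[of A m w d "w # R"] by (simp add: coeff_eq_0)
  then show ?case using Suc by (simp add: coeff_form_line_poly_Suc replicate_app_Cons_same)
qed simp

lemma coeff_form_line_poly_1: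
  assumes "symmetric_form n A" "length R + m = n"
  shows "coeff (form_line_poly A m w d R) 1 = of_nat m * A (d # replicate (m - 1) w @ R)"
  using assms(2)
proof (induction m arbitrary: R)
  case (Suc m)
  have len: "length (d # replicate m w @ R) = n" using Suc.prems by simp
  have "coeff (form_line_poly A m w d (w # R)) 1 = of_nat m * A (d # replicate m w @ R)"
  proof (cases m)
    case 0
    then show ?thesis using degree_form_line_poly[of A 0 w d "w # R"] by (simp add: coeff_eq_0)
  next
    case (Suc m')
    then show ?thesis
      using Suc.IH[of "w # R"] Suc.prems
        symmetric_formD[OF assms(1) len, of "d # replicate m' w @ w # R"]
      by (simp add: replicate_app_Cons_same)
  qed
  moreover have "coeff (form_line_poly A m w d (d # R)) 0 = A (d # replicate m w @ R)"
    using symmetric_formD[OF assms(1) len, of "replicate m w @ d # R"]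
    by (simp add: coeff_form_line_poly_0)
  ultimately show ?case by (simp add: coeff_form_line_poly_Suc(2)[of _ _ _ _ _ 0] algebra_simps)
qed simp

lemma coeff_form_line_poly_pred:
  assumes "symmetric_form n A" "length R + Suc m = n"
  shows "coeff (form_line_poly A (Suc m) w d R) m = of_nat (Suc m) * A (w # replicate m d @ R)"
  using assms(2)
proof (induction m arbitrary: R)
  case 0
  then show ?case by (simp add: coeff_form_line_poly_Suc coeff_form_line_poly_0)
next
  case (Suc m)
  have len: "length (w # replicate (Suc m) d @ R) = n" using Suc.prems by simp
  have "coeff (form_line_poly A (Suc m) w d (w # R)) (Suc m) = A (w # replicate (Suc m) d @ R)"
    using symmetric_formD[OF assms(1) len, of "replicate (Suc m) d @ w # R"]
    by (simp add: coeff_form_line_poly_top)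
  moreover have "coeff (form_line_poly A (Suc m) w d (d # R)) m =
      of_nat (Suc m) * A (w # replicate (Suc m) d @ R)"
    using Suc.IH[of "d # R"] Suc.prems by (simp add: replicate_app_Cons_same)
  ultimately show ?case by (simp add: coeff_form_line_poly_Suc algebra_simps)
qed

section \<open>Top coefficients of a polynomial bounded by a power of 1 + t^2\<close>

lemma poly_alternating_le_degree:
  fixes D :: "real poly" and t :: "nat \<Rightarrow> real"
  assumes dec: "\<And>i. i < n \<Longrightarrow> t (Suc i) < t i"
    and alt: "\<And>i. i \<le> n \<Longrightarrow> 0 < e * (-1) ^ i * poly D (t i)"
  shows "n \<le> degree D"
proof -
  have sign: "poly D (t (Suc i)) * poly D (t i) < 0" if "i < n" for i
  proof -
    have "0 < (e * (-1) ^ Suc i * poly D (t (Suc i))) * (e * (-1) ^ i * poly D (t i))"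
      using that by (intro mult_pos_pos alt) auto
    also have "\<dots> = - ((e * (-1) ^ i)\<^sup>2 * (poly D (t (Suc i)) * poly D (t i)))"
      by (simp add: power2_eq_square algebra_simps)
    finally show ?thesis
      using mult_nonneg_nonneg[OF zero_le_power2[of "e * (-1) ^ i"], of "poly D (t (Suc i)) * poly D (t i)"]
      by linarith
  qed
  have "D \<noteq> 0" using alt[of 0] by auto
  have "\<forall>i<n. \<exists>r. t (Suc i) < r \<and> r < t i \<and> poly D r = 0"
    using poly_IVT[OF dec sign] by blast
  then obtain r where r: "\<And>i. i < n \<Longrightarrow> t (Suc i) < r i \<and> r i < t i \<and> poly D (r i) = 0"
    by metis
  have r_dec: "r k < r i" if "i < k" "k < n" for i k
    using that
  proof (induction k)
    case (Suc k)
    then have "r (Suc k) < r k" using r[of k] r[of "Suc k"] by simp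
    then show ?case using Suc by (cases "i = k") auto
  qed simp
  have "inj_on r {..<n}"
    by (intro inj_onI) (metis lessThan_iff nat_neq_iff order_less_irrefl r_dec)
  then have "n = card (r ` {..<n})" by (simp add: card_image)
  also have "\<dots> \<le> card {x. poly D x = 0}"
    using r poly_roots_finite[OF \<open>D \<noteq> 0\<close>] by (intro card_mono) auto
  also have "\<dots> \<le> degree D" by (rule card_poly_roots_bound[OF \<open>D \<noteq> 0\<close>])
  finally show ?thesis .
qed

lemma cot_less_cot:
  assumes "0 < a" "a < b" "b < pi"
  shows "cot b < cot a"
proof -
  have "sin a > 0" "sin b > 0" "sin (b - a) > 0"
    using assms by (auto intro: sin_gt_zero)
  then show ?thesis by (simp add: cot_def sin_diff field_simps)
qed

lemma sqrt_one_plus_cot_power: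
  assumes "sin \<phi> > 0"
  shows "sqrt (1 + (cot \<phi>)\<^sup>2) ^ p = 1 / sin \<phi> ^ p"
proof -
  have "1 + (cot \<phi>)\<^sup>2 = (1 / sin \<phi>)\<^sup>2"
    using assms sin_cos_squared_add[of \<phi>] by (simp add: cot_def field_simps power2_eq_square)
  then have "sqrt (1 + (cot \<phi>)\<^sup>2) = 1 / sin \<phi>" using assms by simp
  then show ?thesis by (simp add: power_divide)
qed

lemma poly_Re_binomial:
  "poly (map_poly Re (smult c ([:\<i>, 1:] ^ p))) t = Re (c * (of_real t + \<i>) ^ p)"
proof -
  have "poly (map_poly Re Q) t = Re (poly Q (of_real t))" for Q :: "complex poly"
    by (induction Q) (simp_all add: map_poly_pCons)
  then show ?thesis by (simp add: poly_power algebra_simps)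
qed

lemma poly_Re_binomial_cot:
  assumes "sin \<phi> \<noteq> 0"
  shows "poly (map_poly Re (smult c ([:\<i>, 1:] ^ p))) (cot \<phi>) = Re (c * cis (p * \<phi>)) / sin \<phi> ^ p"
proof -
  have "complex_of_real (cot \<phi>) + \<i> = cis \<phi> / complex_of_real (sin \<phi>)"
    using assms by (simp add: cot_def complex_eq_iff field_simps)
  then have "(complex_of_real (cot \<phi>) + \<i>) ^ p = cis \<phi> ^ p / complex_of_real (sin \<phi>) ^ p"
    by (simp add: power_divide)
  also have "\<dots> = cis (p * \<phi>) / complex_of_real (sin \<phi> ^ p)"
    by (simp add: Complex.DeMoivre)
  finally show ?thesis
    unfolding poly_Re_binomial by (simp only: times_divide_eq_right Re_divide_of_real)
qed

lemma node_angle_bounds: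
  fixes j p :: nat
  assumes "0 < \<theta>" "\<theta> < pi" "j < p"
  shows "0 < (\<theta> + j * pi) / p \<and> (\<theta> + j * pi) / p < pi"
proof -
  have "real j * pi \<le> real p * pi - pi"
    using assms(3) mult_right_mono[of "real j" "real p - 1" pi] by (simp add: algebra_simps)
  then have "0 < \<theta> + real j * pi" "\<theta> + real j * pi < real p * pi"
    using assms(1,2) by (simp_all add: add_pos_nonneg)
  then show ?thesis using assms(3) by (simp add: field_simps)
qed

lemma Re_Complex_mult_cis_node:
  "Re (Complex (r * cos \<theta>) (- (r * sin \<theta>)) * cis (\<theta> + j * pi)) = r * (-1) ^ j"
proof -
  have "Re (Complex (r * cos \<theta>) (- (r * sin \<theta>)) * cis (\<theta> + j * pi)) =
      r * (cos (\<theta> + j * pi) * cos \<theta> + sin (\<theta> + j * pi) * sin \<theta>)"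
    by (simp add: algebra_simps)
  also have "cos (\<theta> + j * pi) * cos \<theta> + sin (\<theta> + j * pi) * sin \<theta> = cos (\<theta> + j * pi - \<theta>)"
    by (rule cos_diff[symmetric])
  finally show ?thesis by simp
qed

lemma coeff_Re_binomial:
  assumes "k \<le> p"
  shows "coeff (map_poly Re (smult c ([:\<i>, 1:] ^ p))) k = Re (c * of_nat (p choose k) * \<i> ^ (p - k))"
  using assms by (simp add: coeff_map_poly coeff_linear_poly_power)

lemma degree_Re_binomial: "degree (map_poly Re (smult c ([:\<i>, 1:] ^ p))) \<le> p"
  by (rule order_trans[OF map_poly_degree_leq])
     (simp add: order_trans[OF degree_power_le])

lemma polar_upper_half_plane:
  fixes a b :: real
  assumes "b \<noteq> 0"
  obtains \<theta> \<epsilon> where "0 < \<theta>" "\<theta> < pi" "\<bar>\<epsilon>\<bar> = 1"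
    "a = \<epsilon> * sqrt (a\<^sup>2 + b\<^sup>2) * cos \<theta>" "b = \<epsilon> * sqrt (a\<^sup>2 + b\<^sup>2) * sin \<theta>"
proof -
  define K where "K = sqrt (a\<^sup>2 + b\<^sup>2)"
  define \<epsilon> where "\<epsilon> = sgn b"
  have K: "K > 0" "K\<^sup>2 = a\<^sup>2 + b\<^sup>2" using assms by (simp_all add: K_def sum_power2_gt_zero_iff)
  have \<epsilon>: "\<bar>\<epsilon>\<bar> = 1" "\<epsilon>\<^sup>2 = 1" "\<epsilon> * b \<ge> 0"
    using assms by (auto simp: \<epsilon>_def sgn_if)
  have "(\<epsilon> * a / K)\<^sup>2 + (\<epsilon> * b / K)\<^sup>2 = 1"
    using K \<epsilon>(2) assms by (simp add: power_divide power_mult_distrib flip: add_divide_distrib)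
  moreover have "0 \<le> \<epsilon> * b / K" using K \<epsilon>(3) by simp
  ultimately obtain \<theta> where \<theta>: "0 \<le> \<theta>" "\<theta> \<le> pi" "\<epsilon> * a / K = cos \<theta>" "\<epsilon> * b / K = sin \<theta>"
    using sincos_total_pi by (metis add.commute)
  have "\<epsilon> * a = K * cos \<theta>" "\<epsilon> * b = K * sin \<theta>"
    using \<theta>(3,4) K(1) by (simp_all add: divide_eq_eq mult.commute)
  moreover have "\<epsilon> * \<epsilon> = 1" using \<epsilon>(2) by (simp add: power2_eq_square)
  ultimately have ab: "a = \<epsilon> * K * cos \<theta>" "b = \<epsilon> * K * sin \<theta>"
    by (metis mult.assoc mult_1)+
  then have "\<theta> \<noteq> 0" "\<theta> \<noteq> pi" using assms by auto
  then have "0 < \<theta>" "\<theta> < pi" using \<theta>(1,2) by auto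
  then show ?thesis using that \<epsilon>(1) ab unfolding K_def by blast
qed

lemma degree_diff_le_of_top_coeffs:
  fixes P Q :: "'a::comm_ring poly"
  assumes "degree P \<le> p" "degree Q \<le> p"
    and "coeff P p = coeff Q p" "coeff P (p - 1) = coeff Q (p - 1)"
  shows "degree (P - Q) \<le> p - 2"
proof (rule degree_le, intro allI impI)
  fix i assume "p - 2 < i"
  then consider "i = p - 1" | "i = p" | "p < i" by linarith
  then show "coeff (P - Q) i = 0"
    by cases (use assms in \<open>simp_all add: coeff_eq_0\<close>)
qed

text \<open>
  Compare P with S(t) = Re(c (t + i)^p), c = a - i b, which has the same two top coefficients a and
  p b. At the p points t_j = cot((theta + j pi)/p) the values of S alternate between
  +K/sin^p and -K/sin^p, with K = sqrt(a^2 + b^2); if K > M, then S - P, of degree at most p - 2,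
  would change sign p - 1 times.
\<close>

lemma poly_top_coeffs_bound:
  fixes P :: "real poly"
  assumes deg: "degree P \<le> p" and p2: "2 \<le> p"
    and bound: "\<And>t. \<bar>poly P t\<bar> \<le> M * sqrt (1 + t\<^sup>2) ^ p"
    and lead: "\<bar>coeff P p\<bar> \<le> M"
  shows "(coeff P p)\<^sup>2 + (coeff P (p - 1) / p)\<^sup>2 \<le> M\<^sup>2"
proof (rule ccontr)
  define a b where "a = coeff P p" and "b = coeff P (p - 1) / p"
  define K where "K = sqrt (a\<^sup>2 + b\<^sup>2)"
  assume contra: "\<not> ?thesis"
  then have KM: "M < K" unfolding K_def a_def b_def by (simp add: real_less_rsqrt)
  have "a\<^sup>2 \<le> M\<^sup>2" using power_mono[OF lead abs_ge_zero, of 2] by (simp add: a_def)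
  then have "b \<noteq> 0" using contra p2 by (auto simp: a_def b_def)
  then obtain \<theta> \<epsilon> where \<theta>: "0 < \<theta>" "\<theta> < pi" and \<epsilon>: "\<bar>\<epsilon>\<bar> = 1"
    and ab: "a = \<epsilon> * K * cos \<theta>" "b = \<epsilon> * K * sin \<theta>"
    using polar_upper_half_plane unfolding K_def by metis
  define \<phi> where "\<phi> j = (\<theta> + j * pi) / p" for j :: nat
  define t where "t j = cot (\<phi> j)" for j
  define S where "S = map_poly Re (smult (Complex a (- b)) ([:\<i>, 1:] ^ p))"
  have \<phi>: "0 < \<phi> j \<and> \<phi> j < pi" if "j < p" for j
    unfolding \<phi>_def by (rule node_angle_bounds[OF \<theta> that])
  have sin_pos: "sin (\<phi> j) > 0" if "j < p" for j using \<phi>[OF that] by (simp add: sin_gt_zero)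
  have alt: "0 < \<epsilon> * (-1) ^ j * poly (S - P) (t j)" if "j \<le> p - 1" for j
  proof -
    have j: "j < p" using that p2 by simp
    have "real p * \<phi> j = \<theta> + j * pi" using p2 by (simp add: \<phi>_def)
    then have "poly S (t j) = \<epsilon> * K * (-1) ^ j / sin (\<phi> j) ^ p"
      using sin_pos[OF j] Re_Complex_mult_cis_node[of "\<epsilon> * K" \<theta> j]
      by (simp add: S_def t_def poly_Re_binomial_cot ab)
    moreover have "\<epsilon> * \<epsilon> = 1" using \<epsilon> by (metis abs_mult_self_eq mult_1)
    ultimately have "\<epsilon> * (-1) ^ j * poly S (t j) = K / sin (\<phi> j) ^ p"
      by (simp add: mult_ac flip: power_mult_distrib)
    moreover have "\<epsilon> * (-1) ^ j * poly P (t j) < K / sin (\<phi> j) ^ p"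
    proof -
      have "\<epsilon> * (-1) ^ j * poly P (t j) \<le> \<bar>poly P (t j)\<bar>"
        using abs_ge_self[of "\<epsilon> * (-1) ^ j * poly P (t j)"] \<epsilon> by (simp add: abs_mult)
      also have "\<dots> \<le> M / sin (\<phi> j) ^ p"
        using bound[of "t j"] sqrt_one_plus_cot_power[OF sin_pos[OF j]] by (simp add: t_def)
      also have "\<dots> < K / sin (\<phi> j) ^ p"
        using KM sin_pos[OF j] by (simp add: divide_strict_right_mono)
      finally show ?thesis .
    qed
    ultimately show ?thesis by (simp add: algebra_simps)
  qed
  have "p - 1 \<le> degree (S - P)"
  proof (rule poly_alternating_le_degree[OF _ alt])
    fix i assume "i < p - 1"
    then show "t (Suc i) < t i"
      using \<phi>[of i] \<phi>[of "Suc i"] p2 by (auto simp: t_def \<phi>_def intro!: cot_less_cot divide_strict_right_mono)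
  qed
  moreover have "degree (S - P) \<le> p - 2"
  proof (rule degree_diff_le_of_top_coeffs[OF _ deg])
    show "degree S \<le> p" unfolding S_def by (rule degree_Re_binomial)
    show "coeff S p = coeff P p" by (simp add: S_def a_def coeff_Re_binomial)
    have "p choose (p - 1) = p" "p - (p - 1) = 1" using binomial_symmetric[of "p - 1" p] p2 by simp_all
    then show "coeff S (p - 1) = coeff P (p - 1)" using p2 by (simp add: S_def b_def coeff_Re_binomial)
  qed
  ultimately show False using p2 by simp
qed

section \<open>Symmetry of second derivatives\<close>

lemma has_real_derivative_along_line:
  fixes g :: "'a::real_normed_vector \<Rightarrow> real"
  assumes "(g has_derivative G') (at (a + s *\<^sub>R u))"
  shows "((\<lambda>s. g (a + s *\<^sub>R u)) has_real_derivative G' u) (at s)"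
proof -
  have "((\<lambda>s. a + s *\<^sub>R u) has_derivative (\<lambda>t. t *\<^sub>R u)) (at s)"
    by (auto intro!: derivative_eq_intros)
  from has_derivative_compose[OF this assms]
  have "((\<lambda>s. g (a + s *\<^sub>R u)) has_derivative (\<lambda>t. G' (t *\<^sub>R u))) (at s)" by simp
  moreover have "(\<lambda>t. G' (t *\<^sub>R u)) = (*) (G' u)"
    using linear_scale[OF has_derivative_linear[OF assms]] by (auto simp: fun_eq_iff)
  ultimately show ?thesis by (simp add: has_field_derivative_def)
qed

lemma mixed_difference_mean_value:
  fixes g :: "'a::real_normed_vector \<Rightarrow> real"
  assumes g: "\<And>y. y \<in> U \<Longrightarrow> (g has_derivative G y) (at y)"
    and seg: "\<And>s. 0 \<le> s \<Longrightarrow> s \<le> h \<Longrightarrow> z + s *\<^sub>R u \<in> U \<and> z + h *\<^sub>R v + s *\<^sub>R u \<in> U"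
    and h: "0 < h"
  obtains \<xi> where "0 < \<xi>" "\<xi> < h"
    "g (z + h *\<^sub>R v + h *\<^sub>R u) - g (z + h *\<^sub>R u) - g (z + h *\<^sub>R v) + g z =
       h * (G (z + h *\<^sub>R v + \<xi> *\<^sub>R u) u - G (z + \<xi> *\<^sub>R u) u)"
proof -
  define \<phi> where "\<phi> s = g (z + h *\<^sub>R v + s *\<^sub>R u) - g (z + s *\<^sub>R u)" for s
  have "(\<phi> has_real_derivative G (z + h *\<^sub>R v + s *\<^sub>R u) u - G (z + s *\<^sub>R u) u) (at s)"
    if "0 \<le> s" "s \<le> h" for s
    unfolding \<phi>_def using seg[OF that]
    by (intro DERIV_diff has_real_derivative_along_line g) auto
  then obtain \<xi> where "0 < \<xi>" "\<xi> < h"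
      "\<phi> h - \<phi> 0 = (h - 0) * (G (z + h *\<^sub>R v + \<xi> *\<^sub>R u) u - G (z + \<xi> *\<^sub>R u) u)"
    using MVT2[OF h, of \<phi> "\<lambda>s. G (z + h *\<^sub>R v + s *\<^sub>R u) u - G (z + s *\<^sub>R u) u"] by auto
  then show ?thesis using that by (simp add: \<phi>_def)
qed

lemma mixed_difference_estimate:
  fixes g :: "'a::real_normed_vector \<Rightarrow> real"
  assumes U: "open U" "z \<in> U"
    and g: "\<And>y. y \<in> U \<Longrightarrow> (g has_derivative G y) (at y)"
    and G: "((\<lambda>y. G y u) has_derivative H) (at z)"
    and e: "e > 0"
  shows "\<exists>\<delta>>0. \<forall>h. 0 < h \<and> h < \<delta> \<longrightarrow>
    \<bar>g (z + h *\<^sub>R v + h *\<^sub>R u) - g (z + h *\<^sub>R u) - g (z + h *\<^sub>R v) + g z - h\<^sup>2 * H v\<bar> \<le> e * h\<^sup>2"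
proof -
  obtain r where r: "r > 0" "ball z r \<subseteq> U" using U open_contains_ball by blast
  define N where "N = norm u + norm v + 1"
  have N: "N \<ge> 1" by (simp add: N_def)
  have lin: "linear H" using G by (rule has_derivative_linear)
  have "e / (2 * N) > 0" using e N by simp
  then obtain d where d: "d > 0"
    "\<And>y. norm (y - z) < d \<Longrightarrow> \<bar>G y u - G z u - H (y - z)\<bar> \<le> e / (2 * N) * norm (y - z)"
    using G unfolding has_derivative_at_alt by (metis real_norm_def)
  have near: "norm (s *\<^sub>R u + t *\<^sub>R v) < h * N" if "0 \<le> s" "s \<le> h" "0 \<le> t" "t \<le> h" "0 < h" for s t h
  proof -
    have "norm (s *\<^sub>R u + t *\<^sub>R v) \<le> h * norm u + h * norm v"
      using norm_triangle_ineq[of "s *\<^sub>R u" "t *\<^sub>R v"] that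
      by (simp add: add_mono mult_right_mono order_trans)
    also have "\<dots> < h * N" using that by (simp add: N_def algebra_simps)
    finally show ?thesis .
  qed
  show ?thesis
  proof (intro exI[of _ "min d r / N"] conjI allI impI)
    show "0 < min d r / N" using d r N by simp
    fix h assume h: "0 < h \<and> h < min d r / N"
    then have hN: "h * N < min d r" using N by (simp add: field_simps)
    have close: "norm (y - z) < min d r" if "y = z + (s *\<^sub>R u + t *\<^sub>R v)" "0 \<le> s" "s \<le> h" "0 \<le> t" "t \<le> h" for y s t
      using near[of s h t] that h hN by simp
    have "z + s *\<^sub>R u \<in> U \<and> z + h *\<^sub>R v + s *\<^sub>R u \<in> U" if "0 \<le> s" "s \<le> h" for s
      using close[of "z + s *\<^sub>R u" s 0] close[of "z + h *\<^sub>R v + s *\<^sub>R u" s h] that h r(2)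
      by (auto simp: dist_norm norm_minus_commute algebra_simps)
    then obtain \<xi> where \<xi>: "0 < \<xi>" "\<xi> < h"
      and mvt: "g (z + h *\<^sub>R v + h *\<^sub>R u) - g (z + h *\<^sub>R u) - g (z + h *\<^sub>R v) + g z =
        h * (G (z + h *\<^sub>R v + \<xi> *\<^sub>R u) u - G (z + \<xi> *\<^sub>R u) u)"
      using mixed_difference_mean_value[OF g] h by metis
    define y1 y2 where "y1 = z + h *\<^sub>R v + \<xi> *\<^sub>R u" and "y2 = z + \<xi> *\<^sub>R u"
    have E: "\<bar>G y u - G z u - H (y - z)\<bar> \<le> e * h / 2"
      if "y = z + (s *\<^sub>R u + t *\<^sub>R v)" "0 \<le> s" "s \<le> h" "0 \<le> t" "t \<le> h" for y s t
    proof -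
      have "\<bar>G y u - G z u - H (y - z)\<bar> \<le> e / (2 * N) * norm (y - z)"
        using d(2) close[OF that] by simp
      also have "\<dots> \<le> e / (2 * N) * (h * N)"
        using near[of s h t] that h e N by (intro mult_left_mono) auto
      finally show ?thesis using N by simp
    qed
    have "H (y1 - z) = H (y2 - z) + h * H v"
      using linear_add[OF lin] linear_scale[OF lin] by (simp add: y1_def y2_def algebra_simps)
    then have "\<bar>(G y1 u - G y2 u) - h * H v\<bar> \<le> e * h"
      using E[of y1 \<xi> h] E[of y2 \<xi> 0] \<xi> h unfolding y1_def y2_def abs_le_iff
      by (simp add: algebra_simps)
    then have "\<bar>h * ((G y1 u - G y2 u) - h * H v)\<bar> \<le> h * (e * h)"
      using h by (simp add: abs_mult mult_left_mono)
    then show "\<bar>g (z + h *\<^sub>R v + h *\<^sub>R u) - g (z + h *\<^sub>R u) - g (z + h *\<^sub>R v) + g z - h\<^sup>2 * H v\<bar> \<le> e * h\<^sup>2"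
      unfolding mvt by (simp add: y1_def y2_def power2_eq_square algebra_simps)
  qed
qed

lemma second_derivative_symmetric:
  fixes g :: "'a::real_normed_vector \<Rightarrow> real"
  assumes U: "open U" "z \<in> U"
    and g: "\<And>y. y \<in> U \<Longrightarrow> (g has_derivative G y) (at y)"
    and G: "\<And>w. ((\<lambda>y. G y w) has_derivative H w) (at z)"
  shows "H u v = H v u"
proof (rule ccontr)
  assume ne: "H u v \<noteq> H v u"
  define e where "e = \<bar>H u v - H v u\<bar> / 4"
  have e: "e > 0" using ne by (simp add: e_def)
  obtain d1 where "d1 > 0" and d1: "\<And>h. 0 < h \<and> h < d1 \<Longrightarrow>
      \<bar>g (z + h *\<^sub>R v + h *\<^sub>R u) - g (z + h *\<^sub>R u) - g (z + h *\<^sub>R v) + g z - h\<^sup>2 * H u v\<bar> \<le> e * h\<^sup>2"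
    using mixed_difference_estimate[OF U g G e] by blast
  obtain d2 where "d2 > 0" and d2: "\<And>h. 0 < h \<and> h < d2 \<Longrightarrow>
      \<bar>g (z + h *\<^sub>R u + h *\<^sub>R v) - g (z + h *\<^sub>R v) - g (z + h *\<^sub>R u) + g z - h\<^sup>2 * H v u\<bar> \<le> e * h\<^sup>2"
    using mixed_difference_estimate[OF U g G e] by blast
  define h where "h = min d1 d2 / 2"
  have h: "0 < h" "h < d1" "h < d2" using \<open>d1 > 0\<close> \<open>d2 > 0\<close> by (auto simp: h_def)
  have "z + h *\<^sub>R u + h *\<^sub>R v = z + h *\<^sub>R v + h *\<^sub>R u" by (simp add: algebra_simps)
  then have "g (z + h *\<^sub>R u + h *\<^sub>R v) = g (z + h *\<^sub>R v + h *\<^sub>R u)" by (simp only:)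
  then have "\<bar>h\<^sup>2 * H u v - h\<^sup>2 * H v u\<bar> \<le> 2 * e * h\<^sup>2"
    using d1[of h] d2[of h] h unfolding abs_le_iff by linarith
  then have "h\<^sup>2 * \<bar>H u v - H v u\<bar> \<le> h\<^sup>2 * (\<bar>H u v - H v u\<bar> / 2)"
    by (simp add: abs_mult e_def flip: right_diff_distrib)
  then show False using h ne by simp
qed

section \<open>Higher derivatives as symmetric multilinear forms\<close>

text \<open>Unfolding kderiv (Suc k) exposes frechet_derivative; all reasoning about higher
  derivatives goes through kderiv_has_derivative instead.\<close>

declare kderiv.simps(2) [simp del]

lemma symmetric_formI_Cons:
  assumes tail: "\<And>u R R'. length R = n \<Longrightarrow> mset R' = mset R \<Longrightarrow> A (u # R') = A (u # R)"
    and swap: "\<And>u v R. Suc (length R) = n \<Longrightarrow> A (u # v # R) = A (v # u # R)"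
  shows "symmetric_form (Suc n) A"
  unfolding symmetric_form_def
proof (intro allI impI)
  fix us vs :: "'a list" assume len: "length us = Suc n" and ms: "mset vs = mset us"
  obtain u R where us: "us = u # R" and lR: "length R = n" using len by (cases us) auto
  obtain v R' where vs: "vs = v # R'" using ms len by (cases vs) auto
  show "A vs = A us"
  proof (cases "u = v")
    case True
    have "mset R' = mset R" using ms us vs True by simp
    from tail[OF lR this, of u] show ?thesis using us vs True by simp
  next
    case False
    have "v \<in> set us" using mset_eq_setD[OF ms] vs by auto
    then have "v \<in> set R" using us False by simp
    define W where "W = remove1 v R"
    have mW: "mset (v # W) = mset R" using \<open>v \<in> set R\<close> by (simp add: W_def)
    have "length R \<noteq> 0" using \<open>v \<in> set R\<close> by auto
    then have lW: "Suc (length W) = n" using \<open>v \<in> set R\<close> lR by (simp add: W_def length_remove1)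
    have "add_mset v (mset R') = add_mset u (add_mset v (mset W))"
      using ms mW by (simp add: us vs)
    then have "mset R' = mset (u # W)" by (simp add: add_mset_commute)
    then have "A vs = A (v # u # W)" using tail[where u = v and R = "u # W" and R' = R'] lW vs by simp
    also have "\<dots> = A (u # v # W)" by (rule swap[OF lW, symmetric])
    also have "\<dots> = A us" using tail[OF lR mW] us by simp
    finally show ?thesis .
  qed
qed

lemma has_derivative_unique_on_open:
  assumes "open U" "z \<in> U" "\<And>y. y \<in> U \<Longrightarrow> g y = g' y"
    and "(g has_derivative D) (at z)" "(g' has_derivative D') (at z)"
  shows "D = D'"
  using has_derivative_unique[OF has_derivative_transform_within_open[OF assms(4,1,2)] assms(5)]
    assms(3) by metis

lemma linear_derivative_of_linear_family:
  fixes g :: "'b::real_vector \<Rightarrow> 'a::real_normed_vector \<Rightarrow> real" and D :: "'b \<Rightarrow> 'a \<Rightarrow> real"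
  assumes U: "open U" "z \<in> U"
    and deriv: "\<And>u. (g u has_derivative D u) (at z)"
    and lin: "\<And>y. y \<in> U \<Longrightarrow> linear (\<lambda>u. g u y)"
  shows "linear (\<lambda>u. D u v)"
proof (rule linearI)
  fix u1 u2
  have "D (u1 + u2) = (\<lambda>v. D u1 v + D u2 v)"
    by (rule has_derivative_unique_on_open[OF U _ deriv has_derivative_add[OF deriv deriv]])
       (simp add: linear_add[OF lin])
  then show "D (u1 + u2) v = D u1 v + D u2 v" by simp
next
  fix c u
  have "D (c *\<^sub>R u) = (\<lambda>v. c * D u v)"
    by (rule has_derivative_unique_on_open[OF U _ deriv has_derivative_mult_right[OF deriv]])
       (simp add: linear_scale[OF lin])
  then show "D (c *\<^sub>R u) v = c *\<^sub>R D u v" by simp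
qed

lemma kderiv_has_derivative:
  assumes "ktimes_differentiable_on p f U" "k < p" "z \<in> U" "length us = k"
  shows "((\<lambda>y. kderiv k f y us) has_derivative (\<lambda>v. kderiv (Suc k) f z (v # us))) (at z)"
proof -
  have "(\<lambda>y. kderiv k f y us) differentiable (at z)"
    using assms unfolding ktimes_differentiable_on_def by auto
  then show ?thesis by (simp add: frechet_derivative_works kderiv.simps(2))
qed

lemma multilinear_form_kderiv:
  assumes U: "open U" and f: "ktimes_differentiable_on p f U"
  shows "k \<le> p \<Longrightarrow> z \<in> U \<Longrightarrow> multilinear_form k (kderiv k f z)"
proof (induction k arbitrary: z)
  case (Suc k)
  have deriv: "((\<lambda>y. kderiv k f y us) has_derivative (\<lambda>v. kderiv (Suc k) f z (v # us))) (at z)"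
    if "length us = k" for us
    using kderiv_has_derivative[OF f _ Suc.prems(2) that] Suc.prems(1) by simp
  show ?case unfolding multilinear_form_def
  proof (intro allI impI)
    fix xs ys :: "'a list" assume len: "length xs + Suc (length ys) = Suc k"
    show "linear (\<lambda>u. kderiv (Suc k) f z (xs @ u # ys))"
    proof (cases xs)
      case Nil
      then show ?thesis using has_derivative_linear[OF deriv[of ys]] len by simp
    next
      case (Cons x xs')
      have len': "length (xs' @ u # ys) = k" for u using len Cons by simp
      have "linear (\<lambda>u. kderiv (Suc k) f z (x # xs' @ u # ys))"
      proof (rule linear_derivative_of_linear_family[where g = "\<lambda>u y. kderiv k f y (xs' @ u # ys)"
            and D = "\<lambda>u v. kderiv (Suc k) f z (v # xs' @ u # ys)", OF U Suc.prems(2) deriv[OF len']])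
        fix y assume "y \<in> U"
        then show "linear (\<lambda>u. kderiv k f y (xs' @ u # ys))"
          using multilinear_formD[OF Suc.IH] len Cons Suc.prems(1) by simp
      qed
      then show ?thesis using Cons by simp
    qed
  qed
qed (simp add: multilinear_form_def)

lemma symmetric_form_kderiv:
  assumes U: "open U" and f: "ktimes_differentiable_on p f U"
  shows "k \<le> p \<Longrightarrow> z \<in> U \<Longrightarrow> symmetric_form k (kderiv k f z)"
proof (induction k arbitrary: z)
  case (Suc k)
  have deriv: "((\<lambda>y. kderiv k f y us) has_derivative (\<lambda>v. kderiv (Suc k) f y (v # us))) (at y)"
    if "length us = k" "y \<in> U" for us y
    using kderiv_has_derivative[OF f _ that(2,1)] Suc.prems(1) by simp
  show ?case
  proof (rule symmetric_formI_Cons)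
    fix u :: 'a and R R' :: "'a list" assume R: "length R = k" "mset R' = mset R"
    then have R': "length R' = k" by (metis size_mset)
    have "(\<lambda>v. kderiv (Suc k) f z (v # R')) = (\<lambda>v. kderiv (Suc k) f z (v # R))"
    proof (rule has_derivative_unique_on_open[OF U Suc.prems(2) _ deriv[OF R' Suc.prems(2)] deriv[OF R(1) Suc.prems(2)]])
      fix y assume "y \<in> U"
      then show "kderiv k f y R' = kderiv k f y R"
        using symmetric_formD[OF Suc.IH R] Suc.prems(1) by simp
    qed
    then show "kderiv (Suc k) f z (u # R') = kderiv (Suc k) f z (u # R)" by (rule fun_cong)
  next
    fix u v :: 'a and R :: "'a list" assume len: "Suc (length R) = k"
    define m where "m = length R"
    have "((\<lambda>y. kderiv m f y R) has_derivative (\<lambda>w. kderiv (Suc m) f y (w # R))) (at y)"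
      if "y \<in> U" for y
      by (rule kderiv_has_derivative[OF f _ that]) (use len Suc.prems(1) in \<open>simp_all add: m_def\<close>)
    moreover have "((\<lambda>y. kderiv (Suc m) f y (w # R)) has_derivative
        (\<lambda>x. kderiv (Suc (Suc m)) f z (x # w # R))) (at z)" for w
      using deriv[of "w # R" z] len Suc.prems(2) by (simp add: m_def)
    ultimately have "kderiv (Suc (Suc m)) f z (v # u # R) = kderiv (Suc (Suc m)) f z (u # v # R)"
      by (rule second_derivative_symmetric[OF U Suc.prems(2)])
    then show "kderiv (Suc k) f z (u # v # R) = kderiv (Suc k) f z (v # u # R)"
      using len by (simp add: m_def)
  qed
qed (simp add: symmetric_form_def)

section \<open>The norm defined by B\<close>

locale pos_def_operator =
  fixes B :: "'a::euclidean_space \<Rightarrow> 'a"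
  assumes B_linear: "linear B"
    and B_self_adjoint: "\<And>u v. B u \<bullet> v = u \<bullet> B v"
    and B_pos_def: "\<And>u. u \<noteq> 0 \<Longrightarrow> B u \<bullet> u > 0"
begin

lemmas B_add = linear_add[OF B_linear]
  and B_scale = linear_scale[OF B_linear]
  and B_diff = linear_diff[OF B_linear]
  and B_zero = linear_0[OF B_linear]

lemma B_inner_commute: "B u \<bullet> v = B v \<bullet> u"
  using B_self_adjoint[of u v] by (simp add: inner_commute)

lemma B_inner_self_nonneg: "B u \<bullet> u \<ge> 0"
  using B_pos_def[of u] by (cases "u = 0") (auto simp: B_zero)

lemma B_inner_self_eq_0_iff: "B u \<bullet> u = 0 \<longleftrightarrow> u = 0"
  using B_pos_def[of u] by (cases "u = 0") (auto simp: B_zero)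

lemma bnorm_nonneg: "bnorm B u \<ge> 0"
  using B_inner_self_nonneg by (simp add: bnorm_def)

lemma bnorm_power2: "(bnorm B u)\<^sup>2 = B u \<bullet> u"
  using B_inner_self_nonneg[of u] by (simp add: bnorm_def)

lemma bnorm_eq_0_iff [simp]: "bnorm B u = 0 \<longleftrightarrow> u = 0"
  by (simp add: bnorm_def B_inner_self_eq_0_iff)

lemma bnorm_zero [simp]: "bnorm B 0 = 0"
  by simp

lemma bnorm_pos: "u \<noteq> 0 \<Longrightarrow> bnorm B u > 0"
  using bnorm_nonneg[of u] by (simp add: order_less_le)

lemma bnorm_scale: "bnorm B (c *\<^sub>R u) = \<bar>c\<bar> * bnorm B u"
proof -
  have "B (c *\<^sub>R u) \<bullet> (c *\<^sub>R u) = c\<^sup>2 * (B u \<bullet> u)" by (simp add: B_scale power2_eq_square)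
  then show ?thesis by (simp add: bnorm_def real_sqrt_mult)
qed

lemma bnorm_minus_commute: "bnorm B (x - y) = bnorm B (y - x)"
  using bnorm_scale[of "-1" "x - y"] by simp

lemma B_Cauchy_Schwarz: "\<bar>B u \<bullet> v\<bar> \<le> bnorm B u * bnorm B v"
proof (cases "v = 0")
  case False
  define t where "t = (B u \<bullet> v) / (B v \<bullet> v)"
  have q: "B v \<bullet> v > 0" using B_pos_def[OF False] .
  have "0 \<le> B (u - t *\<^sub>R v) \<bullet> (u - t *\<^sub>R v)" by (rule B_inner_self_nonneg)
  also have "\<dots> = B u \<bullet> u - (B u \<bullet> v)\<^sup>2 / (B v \<bullet> v)"
    using q B_inner_commute[of v u]
    by (simp add: t_def B_diff B_scale inner_diff_left inner_diff_right power2_eq_square field_simps)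
  finally have "(B u \<bullet> v)\<^sup>2 \<le> (bnorm B u * bnorm B v)\<^sup>2"
    using q by (simp add: power_mult_distrib bnorm_power2 field_simps)
  then show ?thesis
    using bnorm_nonneg by (simp add: power2_le_iff_abs_le mult_nonneg_nonneg)
qed (simp add: B_zero)

lemma bnorm_orthonormal_combination:
  assumes "B d \<bullet> d = 1" "B w \<bullet> w = 1" "B d \<bullet> w = 0"
  shows "bnorm B (\<alpha> *\<^sub>R d + \<beta> *\<^sub>R w) = sqrt (\<alpha>\<^sup>2 + \<beta>\<^sup>2)"
  using assms B_inner_commute[of w d]
  by (simp add: bnorm_def B_add B_scale inner_add_left inner_add_right power2_eq_square)

lemma norm_le_bnorm: "\<exists>c>0. \<forall>u. norm u \<le> c * bnorm B u"
proof -
  have "continuous_on (sphere 0 1) (\<lambda>u. B u \<bullet> u)"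
    using B_linear by (intro continuous_intros) (auto simp: linear_continuous_on linear_conv_bounded_linear)
  moreover have "sphere (0::'a) 1 \<noteq> {}" by (simp add: sphere_eq_empty)
  ultimately obtain u0 where u0: "u0 \<in> sphere 0 1" "\<And>u. u \<in> sphere 0 1 \<Longrightarrow> B u0 \<bullet> u0 \<le> B u \<bullet> u"
    using continuous_attains_inf[OF compact_sphere] by blast
  define \<mu> where "\<mu> = B u0 \<bullet> u0"
  have "u0 \<noteq> 0" using u0(1) by auto
  then have \<mu>: "\<mu> > 0" using B_pos_def[of u0] by (simp add: \<mu>_def)
  have "sqrt \<mu> * norm u \<le> bnorm B u" for u
  proof (cases "u = 0")
    case False
    have "\<mu> \<le> B ((1 / norm u) *\<^sub>R u) \<bullet> ((1 / norm u) *\<^sub>R u)"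
      using u0(2)[of "(1 / norm u) *\<^sub>R u"] False by (simp add: \<mu>_def)
    then have "\<mu> * (norm u)\<^sup>2 \<le> B u \<bullet> u"
      using False by (simp add: B_scale power2_eq_square field_simps)
    then have "sqrt (\<mu> * (norm u)\<^sup>2) \<le> sqrt (B u \<bullet> u)" by (rule real_sqrt_le_mono)
    then show ?thesis using \<mu> by (simp add: bnorm_def real_sqrt_mult)
  qed simp
  then show ?thesis using \<mu> by (intro exI[of _ "1 / sqrt \<mu>"]) (auto simp: field_simps)
qed

lemma B_inv_apply: "B (inv B g) = g"
proof -
  have "inj B" using B_linear B_pos_def by (metis linear_injective_0 inner_zero_left less_irrefl)
  then have "surj B" using B_linear by (simp add: linear_injective_imp_surjective)
  then show ?thesis by (simp add: surj_f_inv_f)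
qed

lemma dnorm_eq_bnorm_inv: "dnorm B g = bnorm B (inv B g)"
  by (simp add: dnorm_def bnorm_def B_inv_apply)

lemma dnorm_nonneg: "dnorm B g \<ge> 0"
  by (simp add: dnorm_eq_bnorm_inv bnorm_nonneg)

lemma inner_le_dnorm_bnorm: "\<bar>g \<bullet> v\<bar> \<le> dnorm B g * bnorm B v"
  using B_Cauchy_Schwarz[of "inv B g" v] by (simp add: dnorm_eq_bnorm_inv B_inv_apply)

lemma dnorm_le:
  assumes "c \<ge> 0" and le: "\<And>v. g \<bullet> v \<le> c * bnorm B v"
  shows "dnorm B g \<le> c"
proof -
  have "(dnorm B g)\<^sup>2 = g \<bullet> inv B g" by (simp add: dnorm_eq_bnorm_inv bnorm_power2 B_inv_apply)
  also have "\<dots> \<le> c * dnorm B g" using le[of "inv B g"] by (simp add: dnorm_eq_bnorm_inv)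
  finally have "dnorm B g * dnorm B g \<le> c * dnorm B g" by (simp add: power2_eq_square)
  then show ?thesis using assms(1) dnorm_nonneg[of g]
    by (cases "dnorm B g = 0") (auto simp: mult_le_cancel_right)
qed

lemma tnorm_bound:
  assumes ml: "multilinear_form p A" and p: "p \<ge> 1"
  shows "tnorm B p A \<ge> 0" and "\<bar>A (replicate p u)\<bar> \<le> tnorm B p A * bnorm B u ^ p"
proof -
  define S where "S = {\<bar>A (replicate p u)\<bar> | u. bnorm B u \<le> 1}"
  obtain C where C: "C \<ge> 0" "\<And>us. length us = p \<Longrightarrow> \<bar>A us\<bar> \<le> C * prod_list (map norm us)"
    using multilinear_form_bounded[OF ml] by blast
  obtain c where c: "c > 0" "\<And>u. norm u \<le> c * bnorm B u" using norm_le_bnorm by blast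
  have "bdd_above S"
  proof (rule bdd_aboveI[of _ "C * c ^ p"])
    fix x assume "x \<in> S"
    then obtain u where u: "x = \<bar>A (replicate p u)\<bar>" "bnorm B u \<le> 1" by (auto simp: S_def)
    have "norm u \<le> c" using c u(2) by (meson less_imp_le mult_left_le order_trans)
    then have "C * norm u ^ p \<le> C * c ^ p" using C(1) by (intro mult_left_mono power_mono) auto
    then show "x \<le> C * c ^ p" using C(2)[of "replicate p u"] u(1) by (simp add: prod_list_replicate)
  qed
  then have le: "\<bar>A (replicate p u)\<bar> \<le> tnorm B p A" if "bnorm B u \<le> 1" for u
    unfolding tnorm_def using that by (intro cSup_upper) (auto simp: S_def)
  obtain p' where p': "p = Suc p'" using p by (cases p) auto
  have zero: "A (replicate p 0) = 0"
    using multilinear_form_zero[OF ml, of "[]" "replicate p' 0"] by (simp add: p')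
  show "tnorm B p A \<ge> 0" using le[of 0] zero by simp
  show "\<bar>A (replicate p u)\<bar> \<le> tnorm B p A * bnorm B u ^ p"
  proof (cases "u = 0")
    case False
    define n where "n = bnorm B u"
    have n: "n > 0" using bnorm_pos[OF False] by (simp add: n_def)
    have "A (replicate p u) = n ^ p * A (replicate p ((1 / n) *\<^sub>R u))"
      using multilinear_form_replicate_scale[OF ml, of "[]" p "[]" n "(1 / n) *\<^sub>R u"] n by simp
    moreover have "\<bar>A (replicate p ((1 / n) *\<^sub>R u))\<bar> \<le> tnorm B p A"
      using n by (intro le) (simp add: bnorm_scale n_def)
    ultimately show ?thesis using n by (simp add: abs_mult n_def mult.commute)
  qed (use zero in \<open>simp add: p'\<close>)
qed

lemma symmetric_form_orthonormal_pair_bound: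
  assumes ml: "multilinear_form p A" and ms: "symmetric_form p A" and p: "p \<ge> 2"
    and bound: "\<And>u. \<bar>A (replicate p u)\<bar> \<le> M * bnorm B u ^ p"
    and orth: "B d \<bullet> d = 1" "B w \<bullet> w = 1" "B d \<bullet> w = 0"
  shows "sqrt ((A (replicate p d))\<^sup>2 + (A (w # replicate (p - 1) d))\<^sup>2) \<le> M"
proof -
  let ?P = "form_line_poly A p w d []"
  have lead: "\<bar>A (replicate p d)\<bar> \<le> M" using bound[of d] orth(1) by (simp add: bnorm_def)
  have "(coeff ?P p)\<^sup>2 + (coeff ?P (p - 1) / p)\<^sup>2 \<le> M\<^sup>2"
  proof (rule poly_top_coeffs_bound[OF degree_form_line_poly p])
    fix t
    have "bnorm B (w + t *\<^sub>R d) = sqrt (1 + t\<^sup>2)"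
      using bnorm_orthonormal_combination[OF orth, of t 1] by (simp add: add.commute)
    then show "\<bar>poly ?P t\<bar> \<le> M * sqrt (1 + t\<^sup>2) ^ p"
      using bound[of "w + t *\<^sub>R d"] poly_form_line_poly[OF ml, of "[]" p w d t] by simp
  qed (use lead in \<open>simp add: coeff_form_line_poly_top\<close>)
  moreover have "coeff ?P (p - 1) = p * A (w # replicate (p - 1) d)"
    using coeff_form_line_poly_pred[OF ms, of "[]" "p - 1" w d] p by simp
  ultimately have "(A (replicate p d))\<^sup>2 + (A (w # replicate (p - 1) d))\<^sup>2 \<le> M\<^sup>2"
    using p by (simp add: coeff_form_line_poly_top)
  moreover have "M \<ge> 0" using lead by linarith
  ultimately show ?thesis using real_sqrt_le_mono by fastforce
qed

lemma symmetric_form_polarization_unit: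
  assumes ml: "multilinear_form p A" and ms: "symmetric_form p A" and p: "p \<ge> 2"
    and bound: "\<And>u. \<bar>A (replicate p u)\<bar> \<le> M * bnorm B u ^ p"
    and d: "bnorm B d = 1"
  shows "\<bar>A (v # replicate (p - 1) d)\<bar> \<le> M * bnorm B v"
proof -
  define R where "R = replicate (p - 1) d"
  have lin: "linear (\<lambda>u. A (u # R))" using multilinear_formD[OF ml, of "[]" R] p by (simp add: R_def)
  have rep: "replicate p x = x # replicate (p - 1) x" for x :: 'a using p by (cases p) auto
  have Bdd: "B d \<bullet> d = 1" using d bnorm_power2[of d] by simp
  define a where "a = A (replicate p d)"
  define \<alpha> where "\<alpha> = B d \<bullet> v"
  define v' where "v' = v - \<alpha> *\<^sub>R d"
  show ?thesis
  proof (cases "v' = 0")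
    case True
    have "\<bar>a\<bar> \<le> M" using bound[of d] d by (simp add: a_def)
    moreover have "v = \<alpha> *\<^sub>R d" using True by (simp add: v'_def)
    then have "A (v # R) = \<alpha> * a" "bnorm B v = \<bar>\<alpha>\<bar>"
      using linear_scale[OF lin] d by (simp_all add: a_def R_def rep bnorm_scale)
    ultimately show ?thesis using mult_left_mono[of "\<bar>a\<bar>" M "\<bar>\<alpha>\<bar>"] by (simp add: R_def abs_mult mult.commute)
  next
    case False
    define \<beta> where "\<beta> = bnorm B v'"
    define w where "w = (1 / \<beta>) *\<^sub>R v'"
    have \<beta>: "\<beta> > 0" using bnorm_pos[OF False] by (simp add: \<beta>_def)
    have v: "v = \<alpha> *\<^sub>R d + \<beta> *\<^sub>R w" using \<beta> by (simp add: w_def v'_def)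
    have "bnorm B w = 1" using \<beta> False by (simp add: w_def bnorm_scale \<beta>_def)
    then have Bww: "B w \<bullet> w = 1" using bnorm_power2[of w] by simp
    have Bdw: "B d \<bullet> w = 0"
      using Bdd by (simp add: w_def v'_def \<alpha>_def B_scale inner_diff_right)
    define b where "b = A (w # replicate (p - 1) d)"
    have "A (v # R) = \<alpha> * a + \<beta> * b"
      unfolding v using linear_add[OF lin] linear_scale[OF lin] by (simp add: a_def b_def R_def rep)
    also have "\<bar>\<dots>\<bar> \<le> sqrt (\<alpha>\<^sup>2 + \<beta>\<^sup>2) * sqrt (a\<^sup>2 + b\<^sup>2)"
      using Cauchy_Schwarz_ineq2[of "(\<alpha>, \<beta>)" "(a, b)"] by (simp add: norm_Pair)
    also have "\<dots> \<le> bnorm B v * M"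
      unfolding v bnorm_orthonormal_combination[OF Bdd Bww Bdw]
      using symmetric_form_orthonormal_pair_bound[OF ml ms p bound Bdd Bww Bdw]
      by (simp add: a_def b_def mult_left_mono)
    finally show ?thesis by (simp add: R_def mult.commute)
  qed
qed

lemma symmetric_form_polarization:
  assumes ml: "multilinear_form p A" and ms: "symmetric_form p A" and p: "p \<ge> 2"
    and bound: "\<And>u. \<bar>A (replicate p u)\<bar> \<le> M * bnorm B u ^ p"
  shows "\<bar>A (v # replicate (p - 1) d)\<bar> \<le> M * bnorm B v * bnorm B d ^ (p - 1)"
proof (cases "d = 0")
  case True
  obtain k where "p = 2 + k" using le_Suc_ex[OF p] by blast
  then have "replicate (p - 1) d = 0 # replicate (p - 2) 0" using True by (simp add: numeral_2_eq_2)
  then have "A (v # replicate (p - 1) d) = 0"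
    using multilinear_form_zero[OF ml, of "[v]" "replicate (p - 2) 0"] p by simp
  then show ?thesis using p True by (simp add: power_0_left)
next
  case False
  define n where "n = bnorm B d"
  have n: "n > 0" using bnorm_pos[OF False] by (simp add: n_def)
  have "bnorm B ((1 / n) *\<^sub>R d) = 1" using n False by (simp add: bnorm_scale n_def)
  from symmetric_form_polarization_unit[OF ml ms p bound this, of v]
  have "\<bar>A (v # replicate (p - 1) ((1 / n) *\<^sub>R d))\<bar> \<le> M * bnorm B v" .
  moreover have "A (v # replicate (p - 1) d) = n ^ (p - 1) * A (v # replicate (p - 1) ((1 / n) *\<^sub>R d))"
    using multilinear_form_replicate_scale[OF ml, of "[v]" "p - 1" "[]" n "(1 / n) *\<^sub>R d"] n p by simp
  ultimately show ?thesis
    using n by (simp add: abs_mult n_def mult_left_mono mult.commute mult.left_commute)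
qed

lemma bnorm_power_has_real_derivative:
  "((\<lambda>s. bnorm B (d + s *\<^sub>R w) ^ Suc (Suc n)) has_real_derivative
      real (Suc (Suc n)) * bnorm B d ^ n * (B d \<bullet> w)) (at 0)"
proof (cases "d = 0")
  case True
  define K where "K = bnorm B w ^ Suc (Suc n)"
  have "bnorm B (d + s *\<^sub>R w) ^ Suc (Suc n) - bnorm B (d + 0 *\<^sub>R w) ^ Suc (Suc n) =
      (s * \<bar>s\<bar> ^ n * K) * (s - 0)" for s
    by (simp add: True K_def bnorm_scale power_mult_distrib abs_mult_self_eq mult_ac)
  moreover have "isCont (\<lambda>s. s * \<bar>s\<bar> ^ n * K) 0" by (intro continuous_intros)
  ultimately show ?thesis
    unfolding CARAT_DERIV by (intro exI[of _ "\<lambda>s. s * \<bar>s\<bar> ^ n * K"]) (simp add: True B_zero)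
next
  case False
  define r where "r = bnorm B d"
  have r: "r > 0" using bnorm_pos[OF False] by (simp add: r_def)
  define Q where "Q s = r\<^sup>2 + 2 * s * (B d \<bullet> w) + s\<^sup>2 * (B w \<bullet> w)" for s
  have bnorm_Q: "bnorm B (d + s *\<^sub>R w) = sqrt (Q s)" for s
    using B_inner_commute[of w d] B_inner_self_nonneg[of d]
    by (simp add: bnorm_def Q_def r_def bnorm_power2 B_add B_scale inner_add_left inner_add_right
        power2_eq_square algebra_simps)
  have Q0: "sqrt (Q 0) = r" using r by (simp add: Q_def)
  have "(Q has_real_derivative 2 * (B d \<bullet> w)) (at 0)"
    unfolding Q_def[abs_def] by (auto intro!: derivative_eq_intros)
  then have "((\<lambda>s. sqrt (Q s)) has_real_derivative inverse r / 2 * (2 * (B d \<bullet> w))) (at 0)"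
    using DERIV_chain2[OF DERIV_real_sqrt] r Q0 by (metis real_sqrt_gt_0_iff)
  from DERIV_power[OF this, of "Suc (Suc n)"]
  have "((\<lambda>s. sqrt (Q s) ^ Suc (Suc n)) has_real_derivative
      real (Suc (Suc n)) * (inverse r / 2 * (2 * (B d \<bullet> w)) * r ^ Suc n)) (at 0)"
    by (simp only: Q0 diff_Suc_Suc diff_zero)
  moreover have "inverse r / 2 * (2 * (B d \<bullet> w)) * r ^ Suc n = r ^ n * (B d \<bullet> w)"
    using r by (simp add: field_simps)
  ultimately have "((\<lambda>s. sqrt (Q s) ^ Suc (Suc n)) has_real_derivative
      real (Suc (Suc n)) * (r ^ n * (B d \<bullet> w))) (at 0)"
    by (simp only:)
  then show ?thesis unfolding bnorm_Q r_def[symmetric] by (simp only: mult.assoc)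
qed

lemma eta_le_dnorm_subgradient:
  assumes "g \<in> subdiff h y"
  shows "eta B f h y \<le> ereal (dnorm B (grad f y + g))"
proof -
  have "Inf {dnorm B (grad f y + g) | g. g \<in> subdiff h y} \<le> dnorm B (grad f y + g)"
    using assms dnorm_nonneg by (intro cInf_lower bdd_belowI[of _ 0]) auto
  then show ?thesis using assms by (auto simp: eta_def)
qed

end

section \<open>Taylor expansion of the gradient\<close>

lemma has_real_derivative_power_over_fact:
  "((\<lambda>s. C * s ^ Suc m / fact (Suc m)) has_real_derivative C * s ^ m / fact m) (at s)"
proof -
  have "((\<lambda>s. C * s ^ Suc m / fact (Suc m)) has_real_derivative C * (real (Suc m) * s ^ m) / fact (Suc m)) (at s)"
    using DERIV_pow[of "Suc m" s] by (intro DERIV_cdivide DERIV_cmult) simp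
  moreover have "C * (real (Suc m) * s ^ m) / fact (Suc m) = C * s ^ m / fact m"
    by (simp add: fact_Suc field_simps del: of_nat_Suc)
  ultimately show ?thesis by simp
qed

lemma le_power_over_fact_of_DERIV:
  fixes u u' :: "real \<Rightarrow> real"
  assumes deriv: "\<And>s. 0 \<le> s \<Longrightarrow> s \<le> t \<Longrightarrow> (u has_real_derivative u' s) (at s)"
    and u0: "u 0 = 0" and bound: "\<And>s. 0 \<le> s \<Longrightarrow> s \<le> t \<Longrightarrow> u' s \<le> C * s ^ m / fact m"
    and t: "0 \<le> t"
  shows "u t \<le> C * t ^ Suc m / fact (Suc m)"
proof -
  have "C * 0 ^ Suc m / fact (Suc m) - u 0 \<le> C * t ^ Suc m / fact (Suc m) - u t"
  proof (rule deriv_nonneg_imp_mono[where g = "\<lambda>s. C * s ^ Suc m / fact (Suc m) - u s"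
        and g' = "\<lambda>s. C * s ^ m / fact m - u' s" and a = 0 and b = t])
    fix s assume "s \<in> {0..t}"
    then show "((\<lambda>s. C * s ^ Suc m / fact (Suc m) - u s) has_real_derivative C * s ^ m / fact m - u' s) (at s)"
      using deriv by (intro DERIV_diff has_real_derivative_power_over_fact) auto
    show "C * s ^ m / fact m - u' s \<ge> 0" using bound \<open>s \<in> {0..t}\<close> by simp
  qed (use t in simp)
  then show ?thesis using u0 by simp
qed

lemma abs_le_power_over_fact_of_DERIV:
  fixes u u' :: "real \<Rightarrow> real"
  assumes deriv: "\<And>s. 0 \<le> s \<Longrightarrow> s \<le> t \<Longrightarrow> (u has_real_derivative u' s) (at s)"
    and u0: "u 0 = 0" and bound: "\<And>s. 0 \<le> s \<Longrightarrow> s \<le> t \<Longrightarrow> \<bar>u' s\<bar> \<le> C * s ^ m / fact m"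
    and t: "0 \<le> t"
  shows "\<bar>u t\<bar> \<le> C * t ^ Suc m / fact (Suc m)"
proof -
  have "u' s \<le> C * s ^ m / fact m" "- u' s \<le> C * s ^ m / fact m" if "0 \<le> s" "s \<le> t" for s
    using bound[OF that] by (simp_all add: abs_le_iff)
  then have "u t \<le> C * t ^ Suc m / fact (Suc m)" "- u t \<le> C * t ^ Suc m / fact (Suc m)"
    using le_power_over_fact_of_DERIV[OF deriv u0 _ t]
      le_power_over_fact_of_DERIV[of t "\<lambda>s. - u s" "\<lambda>s. - u' s", OF DERIV_minus[OF deriv] _ _ t] u0
    by simp_all
  then show ?thesis by simp
qed

lemma abs_le_power_over_fact_of_iterated_DERIV:
  fixes g :: "nat \<Rightarrow> real \<Rightarrow> real"
  assumes "\<And>j s. j < n \<Longrightarrow> 0 \<le> s \<Longrightarrow> s \<le> 1 \<Longrightarrow> (g j has_real_derivative g (Suc j) s) (at s)"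
    and "\<And>j. j < n \<Longrightarrow> g j 0 = 0"
    and "\<And>s. 0 \<le> s \<Longrightarrow> s \<le> 1 \<Longrightarrow> \<bar>g n s\<bar> \<le> C * s ^ m / fact m"
    and "0 \<le> t" "t \<le> 1"
  shows "\<bar>g 0 t\<bar> \<le> C * t ^ (n + m) / fact (n + m)"
  using assms
proof (induction n arbitrary: m t)
  case (Suc n)
  have "\<bar>g n s\<bar> \<le> C * s ^ Suc m / fact (Suc m)" if "0 \<le> s" "s \<le> 1" for s
    by (rule abs_le_power_over_fact_of_DERIV[of s "g n" "g (Suc n)"])
       (use Suc.prems that in simp_all)
  then have "\<bar>g 0 t\<bar> \<le> C * t ^ (n + Suc m) / fact (n + Suc m)"
    by (rule Suc.IH[rotated 2]) (use Suc.prems in simp_all)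
  then show ?case by simp
qed simp

lemma has_real_derivative_taylor_sum:
  "((\<lambda>t. \<Sum>i<Suc N. c i * t ^ i / fact i) has_real_derivative (\<Sum>i<N. c (Suc i) * t ^ i / fact i)) (at t)"
proof -
  have "((\<lambda>t. c 0 + (\<Sum>i<N. c (Suc i) * t ^ Suc i / fact (Suc i))) has_real_derivative
      0 + (\<Sum>i<N. c (Suc i) * t ^ i / fact i)) (at t)"
    by (intro DERIV_add DERIV_const DERIV_sum has_real_derivative_power_over_fact)
  then show ?thesis unfolding sum.lessThan_Suc_shift by (simp only: power_0 fact_0 mult_1_right div_by_1 add_0_left)
qed

lemma kderiv_taylor_remainder_bound:
  assumes f: "ktimes_differentiable_on p f U" and p: "p \<ge> 1"
    and seg: "\<And>t. 0 \<le> t \<Longrightarrow> t \<le> 1 \<Longrightarrow> x + t *\<^sub>R d \<in> U"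
    and lip: "\<And>t. 0 \<le> t \<Longrightarrow> t \<le> 1 \<Longrightarrow>
      \<bar>kderiv p f (x + t *\<^sub>R d) (replicate (p - 1) d @ [v]) - kderiv p f x (replicate (p - 1) d @ [v])\<bar> \<le> C * t"
  shows "\<bar>kderiv 1 f (x + d) [v] - (\<Sum>j<p. kderiv (Suc j) f x (replicate j d @ [v]) / fact j)\<bar> \<le> C / fact p"
proof -
  define \<phi> where "\<phi> j t = kderiv (Suc j) f (x + t *\<^sub>R d) (replicate j d @ [v])" for j t
  define P where "P j t = (\<Sum>i<p - j. \<phi> (j + i) 0 * t ^ i / fact i)" for j t
  define g where "g j t = \<phi> j t - P j t" for j t
  \<comment> \<open>g j is the Taylor remainder of \<phi> j; integrating the bound on g (p - 1) p - 1 times gives C / p!\<close>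
  have "(g j has_real_derivative g (Suc j) t) (at t)" if "j < p - 1" "0 \<le> t" "t \<le> 1" for j t
  proof -
    have "((\<lambda>y. kderiv (Suc j) f y (replicate j d @ [v])) has_derivative
        (\<lambda>w. kderiv (Suc (Suc j)) f (x + t *\<^sub>R d) (w # replicate j d @ [v]))) (at (x + t *\<^sub>R d))"
      using that by (intro kderiv_has_derivative[OF f _ seg]) auto
    from has_real_derivative_along_line[OF this]
    have "(\<phi> j has_real_derivative \<phi> (Suc j) t) (at t)" by (simp add: \<phi>_def[abs_def])
    moreover have "p - j = Suc (p - Suc j)" using that by simp
    then have "(P j has_real_derivative P (Suc j) t) (at t)"
      using has_real_derivative_taylor_sum[where N = "p - Suc j" and c = "\<lambda>i. \<phi> (j + i) 0" and t = t]
      unfolding P_def[abs_def] by simp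
    ultimately show ?thesis unfolding g_def[abs_def] by (rule DERIV_diff)
  qed
  moreover have "g j 0 = 0" if "j < p - 1" for j
    using that by (simp add: g_def P_def \<phi>_def lessThan_Suc_eq_insert_0 Suc_diff_Suc del: lessThan_Suc)
  moreover have "\<bar>g (p - 1) t\<bar> \<le> C * t ^ 1 / fact 1" if "0 \<le> t" "t \<le> 1" for t
    using lip[OF that] p by (simp add: g_def P_def \<phi>_def)
  ultimately have "\<bar>g 0 1\<bar> \<le> C * 1 ^ (p - 1 + 1) / fact (p - 1 + 1)"
    by (intro abs_le_power_over_fact_of_iterated_DERIV[of "p - 1" g C 1 1]) auto
  then show ?thesis using p by (simp add: g_def P_def \<phi>_def)
qed

lemma dualvec_inner:
  fixes L :: "'a::euclidean_space \<Rightarrow> real"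
  assumes "linear L"
  shows "dualvec L \<bullet> v = L v"
proof -
  have "dualvec L \<bullet> v = (\<Sum>b\<in>Basis. L b * (b \<bullet> v))"
    by (simp add: dualvec_def inner_sum_left)
  also have "\<dots> = (\<Sum>b\<in>Basis. (v \<bullet> b) * L b)"
    by (simp add: inner_commute mult.commute)
  also have "\<dots> = L (\<Sum>b\<in>Basis. (v \<bullet> b) *\<^sub>R b)"
    by (simp add: linear_sum[OF assms] linear_scale[OF assms])
  finally show ?thesis by (simp add: euclidean_representation)
qed

lemma grad_inner:
  assumes "ktimes_differentiable_on p f U" "p \<ge> 1" "z \<in> U"
  shows "grad f z \<bullet> v = kderiv 1 f z [v]"
proof -
  have "(f has_derivative (\<lambda>v. kderiv 1 f z [v])) (at z)"
    using kderiv_has_derivative[OF assms(1) _ assms(3), of 0 "[]"] assms(2) by simp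
  then show ?thesis
    by (simp add: grad_def frechet_derivative_at[symmetric] dualvec_inner has_derivative_linear)
qed

lemma taylor_grad_inner:
  assumes U: "open U" and f: "ktimes_differentiable_on p f U" and a: "a \<in> U"
  shows "taylor_grad p f a b \<bullet> v = (\<Sum>k=1..p. kderiv k f a (v # replicate (k - 1) (b - a)) / fact (k - 1))"
  unfolding taylor_grad_def
proof (rule dualvec_inner, rule linear_compose_sum, rule ballI)
  fix k assume "k \<in> {1..p}"
  then have "linear (\<lambda>v. kderiv k f a ([] @ v # replicate (k - 1) (b - a)))"
    by (intro multilinear_formD[OF multilinear_form_kderiv[OF U f _ a]]) auto
  then have "linear ((\<lambda>x. (1 / fact (k - 1)) * x) \<circ> (\<lambda>v. kderiv k f a (v # replicate (k - 1) (b - a))))"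
    by (intro linear_compose linear_times) simp
  then show "linear (\<lambda>v. kderiv k f a (v # replicate (k - 1) (b - a)) / fact (k - 1))"
    by (simp add: o_def)
qed

lemma taylor_grad_inner_lessThan:
  assumes U: "open U" and f: "ktimes_differentiable_on p f U" and a: "a \<in> U"
  shows "taylor_grad p f a b \<bullet> v = (\<Sum>j<p. kderiv (Suc j) f a (replicate j (b - a) @ [v]) / fact j)"
proof -
  have "taylor_grad p f a b \<bullet> v = (\<Sum>j<p. kderiv (Suc j) f a (v # replicate j (b - a)) / fact j)"
    by (simp add: taylor_grad_inner[OF U f a] sum.atLeast1_atMost_eq)
  also have "\<dots> = (\<Sum>j<p. kderiv (Suc j) f a (replicate j (b - a) @ [v]) / fact j)"
    using a by (intro sum.cong refl arg_cong2[where f = "(/)"] symmetric_formD[OF symmetric_form_kderiv[OF U f]]) auto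
  finally show ?thesis .
qed

section \<open>Convex analysis of extended-real functions\<close>

lemma proper_fun_finite:
  assumes "proper_fun h" "h y < \<infinity>"
  shows "h y = ereal (real_of_ereal (h y))"
  using assms by (cases "h y") (auto simp: proper_fun_def)

lemma convex_fun_le_combination:
  fixes h :: "'a::real_vector \<Rightarrow> ereal"
  assumes "convex_fun h" "proper_fun h" "h y < \<infinity>" "h z < \<infinity>" "0 \<le> s" "s \<le> 1"
  shows "h ((1 - s) *\<^sub>R y + s *\<^sub>R z) \<le> ereal ((1 - s) * real_of_ereal (h y) + s * real_of_ereal (h z))"
proof -
  have "(y, real_of_ereal (h y)) \<in> {(x, t). h x \<le> ereal t}" "(z, real_of_ereal (h z)) \<in> {(x, t). h x \<le> ereal t}"
    using proper_fun_finite[OF assms(2)] assms(3,4) by (metis case_prodI mem_Collect_eq order_refl)+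
  then have "(1 - s) *\<^sub>R (y, real_of_ereal (h y)) + s *\<^sub>R (z, real_of_ereal (h z)) \<in> {(x, t). h x \<le> ereal t}"
    using assms(1,5,6) unfolding convex_fun_def by (intro convexD) auto
  then show ?thesis by simp
qed

lemma edom_segment:
  assumes "convex_fun h" "proper_fun h" "a \<in> edom h" "b \<in> edom h" "0 \<le> t" "t \<le> 1"
  shows "a + t *\<^sub>R (b - a) \<in> edom h"
proof -
  have "h ((1 - t) *\<^sub>R a + t *\<^sub>R b) \<le> ereal ((1 - t) * real_of_ereal (h a) + t * real_of_ereal (h b))"
    using convex_fun_le_combination[OF assms(1,2) _ _ assms(5,6), of a b] assms(3,4) by (simp add: edom_def)
  also have "\<dots> < \<infinity>" by simp
  finally have "h ((1 - t) *\<^sub>R a + t *\<^sub>R b) < \<infinity>" .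
  then show ?thesis by (simp add: edom_def algebra_simps)
qed

lemma DERIV_ge_of_secant_bound:
  fixes \<phi> :: "real \<Rightarrow> real"
  assumes "(\<phi> has_real_derivative D) (at 0)"
    and secant: "\<And>s. 0 < s \<Longrightarrow> s \<le> 1 \<Longrightarrow> s * K \<le> \<phi> s - \<phi> 0"
  shows "K \<le> D"
proof (rule tendsto_lowerbound)
  show "((\<lambda>s. (\<phi> s - \<phi> 0) / (s - 0)) \<longlongrightarrow> D) (at_right 0)"
    using has_field_derivative_at_within[OF assms(1), of "{0<..}"] by (simp add: has_field_derivative_iff)
  show "\<forall>\<^sub>F s in at_right 0. K \<le> (\<phi> s - \<phi> 0) / (s - 0)"
    unfolding eventually_at_right_field
    using secant by (intro exI[of _ 1]) (auto simp: pos_le_divide_eq mult.commute)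
qed simp

lemma convex_on_ge_tangent:
  assumes "convex_on U f" "z0 \<in> U" "z \<in> U" "(f has_derivative D) (at z0)"
  shows "f z0 + D (z - z0) \<le> f z"
proof -
  have "((\<lambda>s. - f (z0 + s *\<^sub>R (z - z0))) has_real_derivative - D (z - z0)) (at 0)"
    using has_real_derivative_along_line[of f D z0 0 "z - z0"] assms(4) by (simp add: DERIV_minus)
  moreover have "s * (f z0 - f z) \<le> - f (z0 + s *\<^sub>R (z - z0)) - - f (z0 + 0 *\<^sub>R (z - z0))"
    if "0 < s" "s \<le> 1" for s
  proof -
    have "f ((1 - s) *\<^sub>R z0 + s *\<^sub>R z) \<le> (1 - s) * f z0 + s * f z"
      using that assms(1-3) by (intro convex_onD) auto
    then show ?thesis by (simp add: algebra_simps)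
  qed
  ultimately have "f z0 - f z \<le> - D (z - z0)" by (rule DERIV_ge_of_secant_bound)
  then show ?thesis by simp
qed

lemma subdiff_compfun:
  assumes h: "proper_fun h" and f: "convex_on U f" and dom: "edom h \<subseteq> U"
    and z0: "z0 \<in> edom h" and deriv: "(f has_derivative (\<lambda>v. G \<bullet> v)) (at z0)"
    and g: "g \<in> subdiff h z0"
  shows "G + g \<in> subdiff (compfun f h) z0"
  unfolding subdiff_def
proof (intro CollectI conjI allI)
  have compfun_eq: "compfun f h z = ereal (f z + real_of_ereal (h z))" if "z \<in> edom h" for z
  proof -
    have "h z = ereal (real_of_ereal (h z))" using proper_fun_finite[OF h] that by (simp add: edom_def)
    then obtain r where "h z = ereal r" by blast
    then show ?thesis by (simp add: compfun_def)
  qed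
  show "compfun f h z0 < \<infinity>" using compfun_eq[OF z0] by simp
  fix z
  show "compfun f h z0 + ereal ((G + g) \<bullet> (z - z0)) \<le> compfun f h z"
  proof (cases "h z = \<infinity>")
    case False
    then have z: "z \<in> edom h" by (simp add: edom_def top.not_eq_extremum)
    have "h z0 + ereal (g \<bullet> (z - z0)) \<le> h z" using g by (simp add: subdiff_def)
    then have "real_of_ereal (h z0) + g \<bullet> (z - z0) \<le> real_of_ereal (h z)"
      using proper_fun_finite[OF h, of z0] proper_fun_finite[OF h, of z] z0 z
      by (simp add: edom_def) (metis ereal_less_eq(3) plus_ereal.simps(1))
    moreover have "f z0 + G \<bullet> (z - z0) \<le> f z"
      using convex_on_ge_tangent[OF f _ _ deriv] z0 z dom by auto
    ultimately show ?thesis by (simp add: compfun_eq z0 z inner_add_left)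
  qed (simp add: compfun_def)
qed

lemma minimizer_subgradient:
  fixes h :: "'a::euclidean_space \<Rightarrow> ereal"
  assumes h: "convex_fun h" "proper_fun h" and y: "y \<in> edom h"
    and min: "\<And>z. ereal (m y) + h y \<le> ereal (m z) + h z"
    and deriv: "\<And>w. ((\<lambda>s. m (y + s *\<^sub>R w)) has_real_derivative G \<bullet> w) (at 0)"
  shows "- G \<in> subdiff h y"
  unfolding subdiff_def
proof (intro CollectI conjI allI)
  show "h y < \<infinity>" using y by (simp add: edom_def)
  have hy: "h y = ereal (real_of_ereal (h y))" using proper_fun_finite[OF h(2)] y by (simp add: edom_def)
  fix z
  show "h y + ereal (- G \<bullet> (z - y)) \<le> h z"
  proof (cases "h z = \<infinity>")
    case False
    then have hz: "h z = ereal (real_of_ereal (h z))" using proper_fun_finite[OF h(2)] by (simp add: top.not_eq_extremum)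
    have "s * (real_of_ereal (h y) - real_of_ereal (h z)) \<le> m (y + s *\<^sub>R (z - y)) - m (y + 0 *\<^sub>R (z - y))"
      if "0 < s" "s \<le> 1" for s
    proof -
      define zs where "zs = y + s *\<^sub>R (z - y)"
      have "h zs \<le> ereal ((1 - s) * real_of_ereal (h y) + s * real_of_ereal (h z))"
        using convex_fun_le_combination[OF h, of y z s] that y False
        by (simp add: zs_def edom_def algebra_simps top.not_eq_extremum)
      moreover have "ereal (m y) + h y \<le> ereal (m zs) + h zs" by (rule min)
      ultimately show ?thesis
        by (subst (asm) hy, subst (asm) hz, cases "h zs") (auto simp: zs_def algebra_simps)
    qed
    from DERIV_ge_of_secant_bound[OF deriv this]
    show ?thesis by (subst hy, subst hz) (simp add: inner_minus_left inner_diff_right)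
  qed simp
qed

section \<open>One step of the regularized tensor method\<close>

text \<open>The residual F'(x_(k+1)) of the paper, for a = x_k and y = x_(k+1).\<close>

definition tensor_residual :: "('a::euclidean_space \<Rightarrow> 'a) \<Rightarrow> nat \<Rightarrow> real \<Rightarrow> ('a \<Rightarrow> real) \<Rightarrow> 'a \<Rightarrow> 'a \<Rightarrow> 'a" where
  "tensor_residual B p H f a y =
     grad f y - taylor_grad p f a y - (H / fact p * bnorm B (y - a) ^ (p - 1)) *\<^sub>R B (y - a)"

lemma power_le_powr_of_powr_le:
  fixes r x c :: real
  assumes "0 < r" "0 < c" "r powr c \<le> x"
  shows "r ^ n \<le> x powr (n / c)"
proof -
  have "r = (r powr c) powr (1 / c)" using assms by (simp add: powr_powr)
  also have "\<dots> \<le> x powr (1 / c)" using assms by (intro powr_mono2) auto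
  finally have "r powr n \<le> (x powr (1 / c)) powr n" using assms by (intro powr_mono2) auto
  then show ?thesis using assms by (simp add: powr_realpow powr_powr)
qed

locale composite_tensor_problem = pos_def_operator B for B :: "'a::euclidean_space \<Rightarrow> 'a" +
  fixes f :: "'a \<Rightarrow> real" and h :: "'a \<Rightarrow> ereal" and U :: "'a set" and p :: nat
  assumes p2: "p \<ge> 2" and h_proper: "proper_fun h" and h_convex: "convex_fun h"
    and U_open: "open U" and dom_U: "edom h \<subseteq> U" and f_convex: "convex_on U f"
    and f_diff: "ktimes_differentiable_on p f U"
begin

lemma f_has_derivative_grad: "z \<in> U \<Longrightarrow> (f has_derivative (\<lambda>v. grad f z \<bullet> v)) (at z)"
  using kderiv_has_derivative[OF f_diff _ _, of 0 z "[]"] grad_inner[OF f_diff] p2 by simp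

lemma kderiv_increment_bound:
  assumes lip: "\<And>y z. y \<in> edom h \<Longrightarrow> z \<in> edom h \<Longrightarrow>
      tnorm B p (\<lambda>us. kderiv p f y us - kderiv p f z us) \<le> L * bnorm B (y - z)"
    and a: "a \<in> edom h" and y: "a + t *\<^sub>R d \<in> edom h" and t: "0 \<le> t"
  shows "\<bar>kderiv p f (a + t *\<^sub>R d) (replicate (p - 1) d @ [v]) - kderiv p f a (replicate (p - 1) d @ [v])\<bar>
      \<le> (L * bnorm B d ^ p * bnorm B v) * t"
proof -
  define A where "A us = kderiv p f (a + t *\<^sub>R d) us - kderiv p f a us" for us
  have U: "a + t *\<^sub>R d \<in> U" "a \<in> U" using y a dom_U by auto
  have ml: "multilinear_form p A" unfolding A_def[abs_def]
    by (intro multilinear_form_diff multilinear_form_kderiv[OF U_open f_diff] U order_refl)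
  have ms: "symmetric_form p A" unfolding A_def[abs_def]
    by (intro symmetric_form_diff symmetric_form_kderiv[OF U_open f_diff] U order_refl)
  have "A (replicate (p - 1) d @ [v]) = A (v # replicate (p - 1) d)"
    using p2 by (intro symmetric_formD[OF ms]) auto
  also have "\<bar>\<dots>\<bar> \<le> tnorm B p A * bnorm B v * bnorm B d ^ (p - 1)"
    using tnorm_bound[OF ml] p2 by (intro symmetric_form_polarization[OF ml ms p2]) auto
  also have "\<dots> \<le> (L * (t * bnorm B d)) * bnorm B v * bnorm B d ^ (p - 1)"
    using lip[OF y a] t by (intro mult_right_mono) (simp_all add: A_def[abs_def] bnorm_scale bnorm_nonneg)
  also have "\<dots> = (L * bnorm B d ^ p * bnorm B v) * t"
    using p2 by (simp add: power_eq_if algebra_simps)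
  finally show ?thesis by (simp add: A_def)
qed

lemma taylor_grad_remainder:
  assumes lip: "\<And>y z. y \<in> edom h \<Longrightarrow> z \<in> edom h \<Longrightarrow>
      tnorm B p (\<lambda>us. kderiv p f y us - kderiv p f z us) \<le> L * bnorm B (y - z)"
    and a: "a \<in> edom h" and b: "b \<in> edom h"
  shows "(grad f b - taylor_grad p f a b) \<bullet> v \<le> L * bnorm B (b - a) ^ p * bnorm B v / fact p"
proof -
  have seg: "a + t *\<^sub>R (b - a) \<in> edom h" if "0 \<le> t" "t \<le> 1" for t
    using edom_segment[OF h_convex h_proper a b that] .
  have "\<bar>kderiv 1 f (a + (b - a)) [v] - (\<Sum>j<p. kderiv (Suc j) f a (replicate j (b - a) @ [v]) / fact j)\<bar>
      \<le> L * bnorm B (b - a) ^ p * bnorm B v / fact p"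
    using seg dom_U p2 kderiv_increment_bound[OF lip a seg]
    by (intro kderiv_taylor_remainder_bound[OF f_diff]) auto
  moreover have "grad f b \<bullet> v = kderiv 1 f b [v]"
    using grad_inner[OF f_diff] b dom_U p2 by auto
  moreover have "a \<in> U" using a dom_U by auto
  ultimately show ?thesis
    by (simp add: inner_diff_left taylor_grad_inner_lessThan[OF U_open f_diff] abs_le_iff)
qed

lemma has_real_derivative_taylor_along_line:
  assumes a: "a \<in> U"
  shows "((\<lambda>s. taylor p f a (y + s *\<^sub>R w)) has_real_derivative taylor_grad p f a y \<bullet> w) (at 0)"
proof -
  define d where "d = y - a"
  have "((\<lambda>s. kderiv k f a (replicate k (d + s *\<^sub>R w)) / fact k) has_real_derivative
      kderiv k f a (w # replicate (k - 1) d) / fact (k - 1)) (at 0)" if k: "k \<in> {1..p}" for k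
  proof -
    let ?P = "form_line_poly (kderiv k f a) k d w []"
    have "kderiv k f a (replicate k (d + s *\<^sub>R w)) = poly ?P s" for s
      using poly_form_line_poly[OF multilinear_form_kderiv[OF U_open f_diff _ a], of k "[]" k] k by simp
    moreover have "poly (pderiv ?P) 0 = of_nat k * kderiv k f a (w # replicate (k - 1) d)"
      using coeff_form_line_poly_1[OF symmetric_form_kderiv[OF U_open f_diff _ a], of k "[]" k] k
      by (simp add: poly_0_coeff_0 coeff_pderiv)
    moreover have "fact k = of_nat k * (fact (k - 1) :: real)" using k by (simp add: fact_reduce)
    ultimately show ?thesis using DERIV_cdivide[OF poly_DERIV[of ?P 0], of "fact k"] k by simp
  qed
  then have "((\<lambda>s. f a + (\<Sum>k=1..p. kderiv k f a (replicate k (d + s *\<^sub>R w)) / fact k)) has_real_derivative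
      0 + (\<Sum>k=1..p. kderiv k f a (w # replicate (k - 1) d) / fact (k - 1))) (at 0)"
    by (intro DERIV_add DERIV_const DERIV_sum) auto
  moreover have "taylor p f a (y + s *\<^sub>R w) =
      f a + (\<Sum>k=1..p. kderiv k f a (replicate k (d + s *\<^sub>R w)) / fact k)" for s
    unfolding taylor_def by (simp add: d_def algebra_simps)
  ultimately show ?thesis by (simp add: taylor_grad_inner[OF U_open f_diff a] d_def)
qed

lemma tmodel_minimizer_subgradient:
  assumes a: "a \<in> edom h" and y: "y \<in> edom h"
    and min: "\<And>z. tmodel B p H f h a y \<le> tmodel B p H f h a z"
  shows "- (taylor_grad p f a y + (H / fact p * bnorm B (y - a) ^ (p - 1)) *\<^sub>R B (y - a)) \<in> subdiff h y"
proof (rule minimizer_subgradient[OF h_convex h_proper y])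
  define m where "m u = taylor p f a u + H / fact (p + 1) * bnorm B (u - a) ^ (p + 1)" for u
  show "ereal (m y) + h y \<le> ereal (m z) + h z" for z
    using min[of z] by (simp add: tmodel_def m_def)
  fix w
  have "Suc (Suc (p - 1)) = p + 1" using p2 by simp
  then have "((\<lambda>s. H / fact (p + 1) * bnorm B (y - a + s *\<^sub>R w) ^ (p + 1)) has_real_derivative
      H / fact (p + 1) * (real (p + 1) * bnorm B (y - a) ^ (p - 1) * (B (y - a) \<bullet> w))) (at 0)"
    using bnorm_power_has_real_derivative[of "y - a" w "p - 1"] by (intro DERIV_cmult) simp
  moreover have "H / fact (p + 1) * (real (p + 1) * bnorm B (y - a) ^ (p - 1) * (B (y - a) \<bullet> w)) =
      ((H / fact p * bnorm B (y - a) ^ (p - 1)) *\<^sub>R B (y - a)) \<bullet> w"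
    by (simp add: fact_Suc del: of_nat_Suc)
  ultimately show "((\<lambda>s. m (y + s *\<^sub>R w)) has_real_derivative
      (taylor_grad p f a y + (H / fact p * bnorm B (y - a) ^ (p - 1)) *\<^sub>R B (y - a)) \<bullet> w) (at 0)"
    using has_real_derivative_taylor_along_line[of a y w] a dom_U
    by (auto simp: m_def inner_add_left algebra_simps intro!: DERIV_add)
qed

lemma tmodel_minimizer_in_edom:
  assumes a: "a \<in> edom h" and min: "\<And>z. tmodel B p H f h a y \<le> tmodel B p H f h a z"
  shows "y \<in> edom h"
proof -
  have "tmodel B p H f h a a < \<infinity>"
    using a proper_fun_finite[OF h_proper, of a] by (simp add: tmodel_def edom_def)
  then have "tmodel B p H f h a y < \<infinity>" using min[of a] by (rule le_less_trans[rotated])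
  then show ?thesis by (auto simp: tmodel_def edom_def top.not_eq_extremum)
qed

lemma tensor_residual_bounds:
  assumes lip: "\<And>y z. y \<in> edom h \<Longrightarrow> z \<in> edom h \<Longrightarrow>
      tnorm B p (\<lambda>us. kderiv p f y us - kderiv p f z us) \<le> L * bnorm B (y - z)"
    and L: "0 \<le> L" "L \<le> H" and a: "a \<in> edom h" and y: "y \<in> edom h"
  shows "dnorm B (tensor_residual B p H f a y) \<le> (L + H) / fact p * bnorm B (y - a) ^ p"
    and "tensor_residual B p H f a y \<bullet> (y - a) \<le> 0"
proof -
  define r where "r = bnorm B (y - a)"
  define c where "c = H / fact p * r ^ (p - 1)"
  have r: "r \<ge> 0" "B (y - a) \<bullet> (y - a) = r\<^sup>2" by (simp_all add: r_def bnorm_nonneg bnorm_power2)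
  have c: "c \<ge> 0" using L r by (simp add: c_def)
  have rp: "r ^ (p - 1) * r = r ^ p" using p2 by (simp add: power_eq_if)
  have res: "tensor_residual B p H f a y \<bullet> v =
      (grad f y - taylor_grad p f a y) \<bullet> v - c * (B (y - a) \<bullet> v)" for v
    by (simp add: tensor_residual_def c_def r_def inner_diff_left)
  have rem: "(grad f y - taylor_grad p f a y) \<bullet> v \<le> L * r ^ p * bnorm B v / fact p" for v
    using taylor_grad_remainder[OF lip a y] by (simp add: r_def)
  show "dnorm B (tensor_residual B p H f a y) \<le> (L + H) / fact p * r ^ p"
  proof (rule dnorm_le)
    show "0 \<le> (L + H) / fact p * r ^ p" using L r by simp
    fix v
    have "- (B (y - a) \<bullet> v) \<le> r * bnorm B v"
      using B_Cauchy_Schwarz[of "y - a" v] by (simp add: r_def abs_le_iff)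
    then have "tensor_residual B p H f a y \<bullet> v \<le> L * r ^ p * bnorm B v / fact p + c * (r * bnorm B v)"
      using rem[of v] c by (simp add: res) (metis add_mono mult_left_mono mult_minus_right diff_conv_add_uminus)
    also have "\<dots> = (L + H) / fact p * r ^ p * bnorm B v"
      using rp by (simp add: c_def field_simps)
    finally show "tensor_residual B p H f a y \<bullet> v \<le> (L + H) / fact p * r ^ p * bnorm B v" .
  qed
  have "tensor_residual B p H f a y \<bullet> (y - a) \<le> L * r ^ p * r / fact p - c * r\<^sup>2"
    using rem[of "y - a"] r by (simp add: res r_def)
  also have "\<dots> = (L - H) * (r ^ p * r) / fact p"
    using rp by (simp add: c_def power2_eq_square field_simps)
  also have "\<dots> \<le> 0" using L r by (simp add: divide_nonpos_pos mult_nonpos_nonneg)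
  finally show "tensor_residual B p H f a y \<bullet> (y - a) \<le> 0" .
qed

lemma tensor_residual_subgradient:
  assumes a: "a \<in> edom h" and min: "\<And>z. tmodel B p H f h a y \<le> tmodel B p H f h a z"
  shows "eta B f h y \<le> ereal (dnorm B (tensor_residual B p H f a y))"
    and "tensor_residual B p H f a y \<in> subdiff (compfun f h) y"
proof -
  have y: "y \<in> edom h" by (rule tmodel_minimizer_in_edom[OF a min])
  let ?g = "- (taylor_grad p f a y + (H / fact p * bnorm B (y - a) ^ (p - 1)) *\<^sub>R B (y - a))"
  have g: "?g \<in> subdiff h y" by (rule tmodel_minimizer_subgradient[OF a y min])
  have eq: "tensor_residual B p H f a y = grad f y + ?g" by (simp add: tensor_residual_def)
  show "eta B f h y \<le> ereal (dnorm B (tensor_residual B p H f a y))"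
    unfolding eq by (rule eta_le_dnorm_subgradient[OF g])
  show "tensor_residual B p H f a y \<in> subdiff (compfun f h) y"
    unfolding eq using y dom_U by (intro subdiff_compfun[OF h_proper f_convex dom_U y _ g] f_has_derivative_grad) auto
qed

lemma uniformly_convex_step_length:
  assumes unif_conv: "\<And>y z Gy Gz. y \<in> edom h \<Longrightarrow> z \<in> edom h \<Longrightarrow>
      Gy \<in> subdiff (compfun f h) y \<Longrightarrow> Gz \<in> subdiff (compfun f h) z \<Longrightarrow>
      (Gy - Gz) \<bullet> (y - z) \<ge> \<sigma> * bnorm B (y - z) powr q"
    and a: "a \<in> edom h" and y: "y \<in> edom h" and R: "R \<in> subdiff (compfun f h) y"
    and descent: "R \<bullet> (y - a) \<le> 0" and eta: "eta B f h a \<noteq> \<infinity>" and r: "bnorm B (y - a) > 0"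
  shows "\<sigma> * bnorm B (y - a) powr (q - 1) \<le> real_of_ereal (eta B f h a)"
proof -
  define r where "r = bnorm B (y - a)"
  have ne: "subdiff h a \<noteq> {}" using eta by (auto simp: eta_def)
  have "\<sigma> * r powr q \<le> dnorm B (grad f a + g) * r" if g: "g \<in> subdiff h a" for g
  proof -
    have G: "grad f a + g \<in> subdiff (compfun f h) a"
      using a dom_U by (intro subdiff_compfun[OF h_proper f_convex dom_U a _ g] f_has_derivative_grad) auto
    have "\<sigma> * r powr q \<le> (grad f a + g - R) \<bullet> (a - y)"
      using unif_conv[OF a y G R] by (simp add: r_def bnorm_minus_commute)
    also have "\<dots> = (grad f a + g) \<bullet> (a - y) + R \<bullet> (y - a)"
      by (simp add: inner_diff_left inner_diff_right)
    also have "\<dots> \<le> dnorm B (grad f a + g) * r"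
      using inner_le_dnorm_bnorm[of "grad f a + g" "a - y"] descent
      by (simp add: r_def bnorm_minus_commute abs_le_iff)
    finally show ?thesis .
  qed
  then have "\<sigma> * r powr (q - 1) \<le> Inf {dnorm B (grad f a + g) | g. g \<in> subdiff h a}"
    using ne r by (intro cInf_greatest) (auto simp: r_def powr_diff field_simps)
  then show ?thesis using ne by (simp add: eta_def r_def)
qed

lemma tensor_step_bounds:
  assumes lip: "\<And>y z. y \<in> edom h \<Longrightarrow> z \<in> edom h \<Longrightarrow>
      tnorm B p (\<lambda>us. kderiv p f y us - kderiv p f z us) \<le> L * bnorm B (y - z)"
    and L: "0 < L" and H: "H \<ge> real p * L" and q: "q > 1" and \<sigma>: "\<sigma> > 0"
    and unif_conv: "\<And>y z Gy Gz. y \<in> edom h \<Longrightarrow> z \<in> edom h \<Longrightarrow>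
      Gy \<in> subdiff (compfun f h) y \<Longrightarrow> Gz \<in> subdiff (compfun f h) z \<Longrightarrow>
      (Gy - Gz) \<bullet> (y - z) \<ge> \<sigma> * bnorm B (y - z) powr q"
    and a: "a \<in> edom h" and min: "\<And>z. tmodel B p H f h a y \<le> tmodel B p H f h a z"
    and eta: "eta B f h a \<noteq> \<infinity>"
  shows "dnorm B (tensor_residual B p H f a y) \<le>
      (L + H) / fact p * (real_of_ereal (eta B f h a) / \<sigma>) powr (real p / (q - 1))"
proof -
  have y: "y \<in> edom h" by (rule tmodel_minimizer_in_edom[OF a min])
  have "L \<le> real p * L" using L p2 by (simp add: mult_le_cancel_right1)
  then have LH: "L \<le> H" using H by linarith
  have C: "(L + H) / fact p \<ge> 0" using L LH by simp
  note bounds = tensor_residual_bounds[OF lip less_imp_le[OF L] LH a y]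
  have "bnorm B (y - a) ^ p \<le> (real_of_ereal (eta B f h a) / \<sigma>) powr (real p / (q - 1))"
  proof (cases "y = a")
    case False
    then have r: "bnorm B (y - a) > 0" by (simp add: bnorm_pos)
    have "\<sigma> * bnorm B (y - a) powr (q - 1) \<le> real_of_ereal (eta B f h a)"
      using uniformly_convex_step_length[OF unif_conv a y tensor_residual_subgradient(2)[OF a min] bounds(2) eta r] .
    then have "bnorm B (y - a) powr (q - 1) \<le> real_of_ereal (eta B f h a) / \<sigma>"
      using \<sigma> by (simp add: field_simps)
    then show ?thesis using r q by (intro power_le_powr_of_powr_le) auto
  qed (use p2 in \<open>simp add: power_0_left\<close>)
  then have "(L + H) / fact p * bnorm B (y - a) ^ p \<le>
      (L + H) / fact p * (real_of_ereal (eta B f h a) / \<sigma>) powr (real p / (q - 1))"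
    using C by (rule mult_left_mono)
  with bounds(1) L show ?thesis by simp
qed

end

theorem theorem2:
  fixes B :: "'a::euclidean_space \<Rightarrow> 'a"
    and f :: "'a \<Rightarrow> real" and h :: "'a \<Rightarrow> ereal"
    and U :: "'a set" and p :: nat and L H \<sigma> q :: real
    and x :: "nat \<Rightarrow> 'a"
  assumes B_lin: "linear B"
    and B_sa: "\<And>u v. B u \<bullet> v = u \<bullet> B v"
    and B_pd: "\<And>u. u \<noteq> 0 \<Longrightarrow> B u \<bullet> u > 0"
    and p2: "p \<ge> 2"
    and h_proper: "proper_fun h" and h_closed: "closed_fun h" and h_convex: "convex_fun h"
    and U_open: "open U" and U_convex: "convex U" and domU: "edom h \<subseteq> U"
    and f_convex: "convex_on U f"
    and f_diff: "ktimes_differentiable_on p f U"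
    and L_pos: "0 < L"
    and f_lip: "\<And>y z. y \<in> edom h \<Longrightarrow> z \<in> edom h \<Longrightarrow>
                  tnorm B p (\<lambda>us. kderiv p f y us - kderiv p f z us) \<le> L * bnorm B (y - z)"
    and H_ge: "H \<ge> real p * L"
    and q2: "q \<ge> 2" and \<sigma>_pos: "\<sigma> > 0"
    and unif_conv: "\<And>y z Gy Gz. y \<in> edom h \<Longrightarrow> z \<in> edom h \<Longrightarrow>
                  Gy \<in> subdiff (compfun f h) y \<Longrightarrow> Gz \<in> subdiff (compfun f h) z \<Longrightarrow>
                  (Gy - Gz) \<bullet> (y - z) \<ge> \<sigma> * bnorm B (y - z) powr q"
    and x0: "x 0 \<in> edom h"
    and step: "\<And>k y. tmodel B p H f h (x k) (x (Suc k)) \<le> tmodel B p H f h (x k) y"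
  shows "eta B f h (x (Suc k)) \<le>
           ereal (dnorm B (grad f (x (Suc k)) - taylor_grad p f (x k) (x (Suc k))
              - (H / fact p * bnorm B (x (Suc k) - x k) ^ (p - 1)) *\<^sub>R B (x (Suc k) - x k)))
         \<and> (eta B f h (x k) \<noteq> \<infinity> \<longrightarrow>
            dnorm B (grad f (x (Suc k)) - taylor_grad p f (x k) (x (Suc k))
              - (H / fact p * bnorm B (x (Suc k) - x k) ^ (p - 1)) *\<^sub>R B (x (Suc k) - x k))
            \<le> (L + H) / fact p * (real_of_ereal (eta B f h (x k)) / \<sigma>) powr (real p / (q - 1)))"
proof -
  interpret composite_tensor_problem B f h U p
    using B_lin B_sa B_pd p2 h_proper h_convex U_open domU f_convex f_diff
    by (simp add: composite_tensor_problem_def composite_tensor_problem_axioms_def pos_def_operator_def)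
  have edom: "x j \<in> edom h" for j
    by (induction j) (use x0 tmodel_minimizer_in_edom step in blast)+
  have "q > 1" using q2 by simp
  from tensor_residual_subgradient(1)[OF edom step]
    tensor_step_bounds[OF f_lip L_pos H_ge \<open>q > 1\<close> \<sigma>_pos unif_conv edom step]
  show ?thesis unfolding tensor_residual_def by blast
qed

end
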